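(* Let $1\le p\le q\le\infty$ and let $\theta,\psi\in[0,1]$ satisfy $1/p=1-\psi+\theta\psi$ and $1/q=\theta\psi$. Then for every $T\in M_n(H)$, $n\in\mathbb{N}$, \[\|T\|_{\Phi_p,\Phi_q}\le\|T\|_{(H_{\min},R(\theta))_\psi}.\]
   Context: $H$ is a separable infinite-dimensional Hilbert space with orthonormal basis $(\xi_i)$. $\Phi_p$ is the $\ell_p$-norm and $\mathfrak{S}_p(\mathbb{C}^n)$ is $M_n$ with the Schatten $p$-norm. For finite $T=\sum_i\xi_i\otimes T_i\in H\otimes M_n\cong M_n(H)$, $\rho_T(x)=\sum_iT_ixT_i^*$ and $\|T\|_{\Phi_p,\Phi_q}=\|\rho_T:\mathfrak{S}_p(\mathbb{C}^n)\to\mathfrak{S}_q(\mathbb{C}^n)\|^{1/2}$. $R$ and $C$ are $H$ with matrix norms $\|\sum_i\xi_i\otimes T_i\|_R=\|\sum_iT_iT_i^*\|^{1/2}$, $\|\sum_i\xi_i\otimes T_i\|_C=\|\sum_iT_i^*T_i\|^{1/2}$. $R(\theta)=(R,C)_\theta$ for $0<\theta<1$, $R(0)=R$, $R(1)=C$, and $H_{\min}$ is $H$ with matrix norms $\|\sum_{i=1}^m\xi_i\otimes T_i\|_{\min}=\sup\{\|\sum_iv_iT_i\|:v\in\ell_2^m,\|v\|=1\}$. For operator spaces $E_0,E_1$ with common base space, $(E_0,E_1)_\psi$ denotes the operator space complex interpolation, $M_n((E_0,E_1)_\psi)=(M_n(E_0),M_n(E_1))_\psi$ (with $(E_0,E_1)_0=E_0$,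 $(E_0,E_1)_1=E_1$). *)

theory Defs
  imports "HOL-Analysis.Analysis"
begin

text \<open>Elements of the (Hilbertian) space H = l2 with basis xi_i are square-summable
  sequences; an element T of M_n(H) is represented by its coefficient sequence
  T = (T_i), T_i :: complex n x n matrices, T = sum_i xi_i (x) T_i.
  The size n is the cardinality of the finite index type 'n.\<close>

type_synonym 'n cmat = "complex^'n^'n"

definition adj :: "'n::finite cmat \<Rightarrow> 'n cmat" where
  "adj A = (\<chi> i j. cnj (A $ j $ i))"

definition msc :: "complex \<Rightarrow> 'n::finite cmat \<Rightarrow> 'n cmat" where
  "msc c A = (\<chi> i j. c * A $ i $ j)"

definition opnorm :: "'n::finite cmat \<Rightarrow> real" where
  "opnorm A = onorm (\<lambda>x::complex^'n. A *v x)"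

definition unitary :: "'n::finite cmat \<Rightarrow> bool" where
  "unitary U \<longleftrightarrow> adj U ** U = mat 1"

definition diagm :: "real^'n \<Rightarrow> 'n::finite cmat" where
  "diagm s = (\<chi> i j. if i = j then complex_of_real (s $ i) else 0)"

definition sing_vals :: "'n::finite cmat \<Rightarrow> real^'n \<Rightarrow> bool" where
  "sing_vals x s \<longleftrightarrow> (\<forall>i. 0 \<le> s $ i) \<and>
     (\<exists>U V. unitary U \<and> unitary V \<and> x = U ** diagm s ** V)"

definition schatten :: "ereal \<Rightarrow> 'n::finite cmat \<Rightarrow> real" where
  "schatten p x = (if p = \<infinity> then opnorm x
     else (let s = (SOME s. sing_vals x s) in
           (\<Sum>i\<in>UNIV. s $ i powr real_of_ereal p) powr (1 / real_of_ereal p)))"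

text \<open>rho_T(x) = sum_i T_i x T_i^* for finitely supported T.\<close>
definition rho :: "(nat \<Rightarrow> 'n::finite cmat) \<Rightarrow> 'n cmat \<Rightarrow> 'n cmat" where
  "rho T x = (\<Sum>i\<in>{i. T i \<noteq> 0}. T i ** x ** adj (T i))"

text \<open>||T||_{Phi_p,Phi_q} = ||rho_T : S_p -> S_q||^(1/2).\<close>
definition phi_norm :: "ereal \<Rightarrow> ereal \<Rightarrow> (nat \<Rightarrow> 'n::finite cmat) \<Rightarrow> real" where
  "phi_norm p q T = sqrt (Sup {schatten q (rho T x) | x. schatten p x \<le> 1})"

definition R_norm :: "(nat \<Rightarrow> 'n::finite cmat) \<Rightarrow> real" where
  "R_norm T = sqrt (opnorm (\<Sum>i. T i ** adj (T i)))"

definition C_norm :: "(nat \<Rightarrow> 'n::finite cmat) \<Rightarrow> real" where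
  "C_norm T = sqrt (opnorm (\<Sum>i. adj (T i) ** T i))"

definition min_norm :: "(nat \<Rightarrow> 'n::finite cmat) \<Rightarrow> real" where
  "min_norm T = Sup {opnorm (\<Sum>i. msc (v i) (T i)) | v.
       summable (\<lambda>i. (cmod (v i))^2) \<and> (\<Sum>i. (cmod (v i))^2) = 1}"

text \<open>Hilbert-space (l2) structure of M_n(H), used only for the topology (all the
  norms above are equivalent to it for fixed n).\<close>
definition l2seq :: "(nat \<Rightarrow> 'n::finite cmat) \<Rightarrow> bool" where
  "l2seq T \<longleftrightarrow> summable (\<lambda>i. (norm (T i))^2)"

definition l2norm :: "(nat \<Rightarrow> 'n::finite cmat) \<Rightarrow> real" where
  "l2norm T = sqrt (\<Sum>i. (norm (T i))^2)"

definition strip :: "complex set" where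
  "strip = {z. 0 \<le> Re z \<and> Re z \<le> 1}"

definition admissible :: "(complex \<Rightarrow> nat \<Rightarrow> 'n::finite cmat) \<Rightarrow> bool" where
  "admissible F \<longleftrightarrow>
     (\<forall>z\<in>strip. l2seq (F z)) \<and>
     (\<exists>B. \<forall>z\<in>strip. l2norm (F z) \<le> B) \<and>
     (\<forall>z\<in>strip. \<forall>e>0. \<exists>d>0. \<forall>w\<in>strip. dist w z < d \<longrightarrow>
          l2norm (\<lambda>i. F w i - F z i) < e) \<and>
     (\<forall>i j k. (\<lambda>z. F z i $ j $ k) holomorphic_on {z. 0 < Re z \<and> Re z < 1})"

definition interp :: "((nat \<Rightarrow> 'n::finite cmat) \<Rightarrow> real) \<Rightarrow> ((nat \<Rightarrow> 'n cmat) \<Rightarrow> real)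
    \<Rightarrow> real \<Rightarrow> (nat \<Rightarrow> 'n cmat) \<Rightarrow> real" where
  "interp N0 N1 t x =
     (if t = 0 then N0 x else if t = 1 then N1 x else
      Inf {max (SUP s::real. N0 (F (\<i> * complex_of_real s)))
               (SUP s::real. N1 (F (1 + \<i> * complex_of_real s))) | F.
           admissible F \<and> F (complex_of_real t) = x})"

end

theory Submission
  imports Defs "HOL-Complex_Analysis.Conformal_Mappings"
begin

text \<open>
  By duality, \<open>\<parallel>\<rho>\<^sub>T(x)\<parallel>\<^sub>q\<close> is attained by pairing with a matrix of the unit ball of \<open>S\<^sub>q\<^sub>'\<close>.
  Writing \<open>x\<close> and that matrix through their singular value decompositions, the pairing becomes
  \<open>\<Sum>\<^sub>i \<langle>A' T\<^sub>i B', A T\<^sub>i B\<rangle>\<close>, where \<open>A, A'\<close> are a diagonal matrix from the unit ball of \<open>\<ell>\<^sup>2\<^sup>q\<^sup>'\<close>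
  times a unitary and \<open>B, B'\<close> a unitary times a diagonal matrix from the unit ball of \<open>\<ell>\<^sup>2\<^sup>p\<close>.
  By Cauchy--Schwarz it suffices to bound the Hilbert--Schmidt sandwich
  \<open>(\<Sum>\<^sub>i \<parallel>A T\<^sub>i B\<parallel>\<^sub>2\<^sup>2)\<^sup>1\<^sup>/\<^sup>2\<close> by the interpolated norm of \<open>T\<close>.

  The sandwich is bounded by \<open>\<parallel>A\<parallel>\<^sub>2 \<parallel>B\<parallel>\<^sub>2 \<parallel>T\<parallel>\<^sub>m\<^sub>i\<^sub>n\<close>, and, when the diagonal factor of \<open>B\<close>
  (resp. \<open>A\<close>) has entries of modulus at most one, by \<open>\<parallel>A\<parallel>\<^sub>2 \<parallel>T\<parallel>\<^sub>R\<close> (resp. \<open>\<parallel>B\<parallel>\<^sub>2 \<parallel>T\<parallel>\<^sub>C\<close>).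
  Replacing the diagonal entries by complex powers gives bounded holomorphic families on the strip
  for which these endpoint estimates hold on the boundary lines; Hadamard's three lines theorem,
  applied first between \<open>R\<close> and \<open>C\<close> and then between \<open>H\<^sub>m\<^sub>i\<^sub>n\<close> and \<open>R(\<theta>)\<close>, yields the bound at
  the interior point, where the families pass through the given diagonal matrices.
\<close>

section \<open>Complex vectors and matrices\<close>

definition cinner :: "complex^'n::finite \<Rightarrow> complex^'n \<Rightarrow> complex" where
  "cinner x y = (\<Sum>i\<in>UNIV. cnj (x$i) * y$i)"

definition cdiag :: "complex^'n::finite \<Rightarrow> 'n cmat" where
  "cdiag a = (\<chi> i j. if i = j then a$i else 0)"

lemma sum_mult_le_sqrt_sum_power2:
  fixes a b :: "'i \<Rightarrow> real"
  shows "(\<Sum>i\<in>I. a i * b i) \<le> sqrt (\<Sum>i\<in>I. (a i)^2) * sqrt (\<Sum>i\<in>I. (b i)^2)"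
proof -
  have "(\<Sum>i\<in>I. a i * b i) \<le> sqrt ((\<Sum>i\<in>I. a i * b i)^2)" by simp
  also have "\<dots> \<le> sqrt ((\<Sum>i\<in>I. (a i)^2) * (\<Sum>i\<in>I. (b i)^2))"
    by (rule real_sqrt_le_mono[OF Cauchy_Schwarz_ineq_sum])
  finally show ?thesis by (simp add: real_sqrt_mult)
qed

lemma cmod_sum_mult_le:
  fixes a b :: "'i \<Rightarrow> complex"
  shows "cmod (\<Sum>i\<in>I. a i * b i) \<le> sqrt (\<Sum>i\<in>I. (cmod (a i))^2) * sqrt (\<Sum>i\<in>I. (cmod (b i))^2)"
proof -
  have "cmod (\<Sum>i\<in>I. a i * b i) \<le> (\<Sum>i\<in>I. cmod (a i) * cmod (b i))"
    by (rule order_trans[OF norm_sum]) (simp add: norm_mult)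
  also have "\<dots> \<le> sqrt (\<Sum>i\<in>I. (cmod (a i))^2) * sqrt (\<Sum>i\<in>I. (cmod (b i))^2)"
    by (rule sum_mult_le_sqrt_sum_power2)
  finally show ?thesis .
qed

lemma norm_vec_power2: "(norm (x::'a::real_normed_vector^'n::finite))^2 = (\<Sum>i\<in>UNIV. (norm (x$i))^2)"
  by (simp add: norm_vec_def L2_set_def sum_nonneg)

lemma norm_vec_sqrt: "norm (x::'a::real_normed_vector^'n::finite) = sqrt (\<Sum>i\<in>UNIV. (norm (x$i))^2)"
  by (simp add: norm_vec_def L2_set_def)

lemma norm_mat_power2: "(norm (M::complex^'n::finite^'m::finite))^2 = (\<Sum>i\<in>UNIV. \<Sum>j\<in>UNIV. (cmod (M$i$j))^2)"
  by (simp add: norm_vec_power2[of M] norm_vec_power2)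

lemma norm_mat_power2_columns:
  "(norm (M::complex^'n::finite^'m::finite))^2 = (\<Sum>j\<in>UNIV. (norm (column j M))^2)"
  by (simp add: norm_mat_power2 norm_vec_power2 column_def) (rule sum.swap)

lemma norm_eq_of_power2_eq: "(norm x)^2 = (norm y)^2 \<Longrightarrow> norm x = norm y"
  by (metis norm_ge_zero power2_eq_iff_nonneg)

lemma norm_le_of_power2_le: "(norm x)^2 \<le> c^2 \<Longrightarrow> 0 \<le> c \<Longrightarrow> norm x \<le> c"
  using power2_le_imp_le by blast

lemma cinner_self: "cinner x x = complex_of_real ((norm x)^2)"
proof -
  have "cinner x x = (\<Sum>i\<in>UNIV. complex_of_real ((cmod (x$i))^2))"
    unfolding cinner_def by (rule sum.cong) (simp_all add: complex_norm_square[symmetric] mult.commute)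
  then show ?thesis by (simp add: norm_vec_power2)
qed

lemma cmod_cinner_le: "cmod (cinner x y) \<le> norm x * norm y"
  using cmod_sum_mult_le[of "\<lambda>i. cnj (x$i)" "\<lambda>i. y$i" UNIV] by (simp add: cinner_def norm_vec_sqrt)

lemma cinner_add_right: "cinner x (y + z) = cinner x y + cinner x z"
  by (simp add: cinner_def sum.distrib algebra_simps)
lemma cinner_add_left: "cinner (x + y) z = cinner x z + cinner y z"
  by (simp add: cinner_def sum.distrib algebra_simps)
lemma cinner_diff_right: "cinner x (y - z) = cinner x y - cinner x z"
  by (simp add: cinner_def sum_subtractf algebra_simps)
lemma cinner_scale_right: "cinner x (c *s y) = c * cinner x y"
  by (simp add: cinner_def sum_distrib_left algebra_simps)
lemma cinner_scale_left: "cinner (c *s x) y = cnj c * cinner x y"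
  by (simp add: cinner_def sum_distrib_left algebra_simps)
lemma cinner_commute: "cinner y x = cnj (cinner x y)"
  by (simp add: cinner_def cnj_sum mult.commute)
lemma cinner_sum_right: "cinner x (\<Sum>k\<in>K. f k) = (\<Sum>k\<in>K. cinner x (f k))"
  by (simp add: cinner_def sum_component sum_distrib_left) (rule sum.swap)
lemma cinner_sum_left: "cinner (\<Sum>k\<in>K. f k) x = (\<Sum>k\<in>K. cinner (f k) x)"
  by (simp add: cinner_def sum_component sum_distrib_right cnj_sum) (rule sum.swap)

lemma cinner_eq_0_commute: "cinner x y = 0 \<longleftrightarrow> cinner y x = 0"
  by (subst cinner_commute) simp

lemma norm_add_power2: "(norm (x + y))^2 = (norm x)^2 + 2 * Re (cinner x y) + (norm y)^2"
proof -
  have "(norm (x+y))^2 = Re (cinner (x+y) (x+y))" by (simp add: cinner_self)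
  also have "\<dots> = Re (cinner x x) + Re (cinner x y) + Re (cinner y x) + Re (cinner y y)"
    by (simp add: cinner_add_left cinner_add_right)
  also have "Re (cinner y x) = Re (cinner x y)" by (subst cinner_commute) simp
  finally show ?thesis by (simp add: cinner_self)
qed

lemma Re_cinner: "Re (cinner a b) = inner a b"
  by (simp add: cinner_def inner_vec_def inner_complex_def)

lemma Im_cinner: "Im (cinner a b) = inner (\<i> *s a) b"
  by (simp add: cinner_def inner_vec_def inner_complex_def algebra_simps sum_negf)

lemma norm_scalar_mult_vec: "norm (c *s (x::complex^'n::finite)) = cmod c * norm x"
proof -
  have "(norm (c *s x))^2 = (cmod c * norm x)^2"
    by (simp add: norm_vec_power2[of "c *s x"] norm_vec_power2[of x] norm_mult power_mult_distrib
        sum_distrib_left)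
  then show ?thesis by (metis norm_ge_zero zero_le_mult_iff power2_eq_iff_nonneg)
qed

lemma matrix_vector_mult_nth: "(M *v x)$i = (\<Sum>j\<in>UNIV. M$i$j * x$j)"
  by (simp add: matrix_vector_mult_def)
lemma matrix_mult_nth: "(A ** B)$i$j = (\<Sum>k\<in>UNIV. A$i$k * B$k$j)"
  by (simp add: matrix_matrix_mult_def)
lemma adj_nth [simp]: "adj A $i$j = cnj (A$j$i)"
  by (simp add: adj_def)

lemma matrix_vector_mult_sum:
  fixes M :: "complex^'n::finite^'m::finite"
  shows "M *v (\<Sum>k\<in>K. f k) = (\<Sum>k\<in>K. M *v f k)"
  by (simp add: vec_eq_iff matrix_vector_mult_nth sum_component sum_distrib_left) (rule allI, rule sum.swap)

lemma sum_matrix_vector_mult: "(\<Sum>i\<in>S. (M i::'n::finite cmat)) *v x = (\<Sum>i\<in>S. M i *v x)"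
  by (simp add: vec_eq_iff matrix_vector_mult_nth sum_component sum_distrib_right) (rule allI, rule sum.swap)

lemma sum_matrix_mult: "(\<Sum>i\<in>S. M i) ** (Y::'n::finite cmat) = (\<Sum>i\<in>S. M i ** Y)"
  by (simp add: vec_eq_iff matrix_mult_nth sum_component sum_distrib_right) (intro allI, rule sum.swap)

lemma cinner_matrix_vector_mult: "cinner (A *v x) y = cinner x (adj A *v y)"
  unfolding cinner_def matrix_vector_mult_nth adj_nth
  by (simp add: cnj_sum sum_distrib_left sum_distrib_right ac_simps) (rule sum.swap)

lemma adj_adj [simp]: "adj (adj A) = A"
  by (simp add: vec_eq_iff)
lemma adj_matrix_mult: "adj (A ** B) = adj B ** adj A"
  by (simp add: vec_eq_iff matrix_mult_nth cnj_sum mult.commute)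
lemma adj_mat1 [simp]: "adj (mat 1) = mat 1"
  by (simp add: vec_eq_iff mat_def)
lemma norm_adj [simp]: "norm (adj A) = norm A"
  by (rule norm_eq_of_power2_eq) (simp add: norm_mat_power2, rule sum.swap)

lemma norm_matrix_vector_mult_opnorm: "norm (M *v x) \<le> opnorm M * norm x"
  unfolding opnorm_def by (rule onorm) simp

lemma opnorm_nonneg: "0 \<le> opnorm M"
  unfolding opnorm_def by (rule onorm_pos_le) simp

lemma norm_matrix_vector_mult_le: "norm ((M::complex^'n::finite^'m::finite) *v x) \<le> norm M * norm x"
proof -
  have row: "(cmod ((M *v x)$i))^2 \<le> (norm (M$i))^2 * (norm x)^2" for i
  proof -
    have "cmod ((M *v x)$i) \<le> norm (M$i) * norm x"
      unfolding matrix_vector_mult_nth using cmod_sum_mult_le[of "\<lambda>j. M$i$j" "\<lambda>j. x$j" UNIV]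
      by (simp add: norm_vec_sqrt)
    then show ?thesis by (metis norm_ge_zero power_mono power_mult_distrib)
  qed
  have "(norm (M *v x))^2 \<le> (\<Sum>i\<in>UNIV. (norm (M$i))^2 * (norm x)^2)"
    unfolding norm_vec_power2[of "M *v x"] by (rule sum_mono) (rule row)
  also have "\<dots> = (norm M * norm x)^2"
    by (simp add: norm_vec_power2[of M] sum_distrib_right power_mult_distrib)
  finally show ?thesis by (rule norm_le_of_power2_le) simp
qed

lemma opnorm_le_norm: "opnorm M \<le> norm M"
  unfolding opnorm_def by (rule onorm_le) (rule norm_matrix_vector_mult_le)

lemma column_matrix_mult: "column j (A ** B) = A *v column j B"
  by (simp add: vec_eq_iff column_def matrix_mult_nth matrix_vector_mult_nth)

lemma norm_matrix_mult_le:
  "norm ((A::complex^'n::finite^'m::finite) ** (B::complex^'k::finite^'n)) \<le> norm A * norm B"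
proof -
  have "(norm (A ** B))^2 = (\<Sum>j\<in>UNIV. (norm (A *v column j B))^2)"
    by (simp add: norm_mat_power2_columns column_matrix_mult)
  also have "\<dots> \<le> (\<Sum>j\<in>UNIV. (norm A)^2 * (norm (column j B))^2)"
    by (rule sum_mono) (metis norm_matrix_vector_mult_le norm_ge_zero power_mono power_mult_distrib)
  also have "\<dots> = (norm A * norm B)^2"
    by (simp add: norm_mat_power2_columns[of B] sum_distrib_left power_mult_distrib)
  finally show ?thesis by (rule norm_le_of_power2_le) simp
qed

lemma entry_le_norm: "cmod (M$j$k) \<le> norm (M::'n::finite cmat)"
  using Finite_Cartesian_Product.norm_nth_le order_trans by metis

definition mtrace :: "'n::finite cmat \<Rightarrow> complex" where
  "mtrace M = (\<Sum>k\<in>UNIV. M$k$k)"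

lemma mtrace_add: "mtrace (M + N) = mtrace M + mtrace N"
  by (simp add: mtrace_def sum.distrib)

lemma mtrace_scaleR: "mtrace (c *\<^sub>R M) = c *\<^sub>R mtrace M"
  by (simp add: mtrace_def scaleR_sum_right)

lemma mtrace_sum: "mtrace (\<Sum>i\<in>S. M i) = (\<Sum>i\<in>S. mtrace (M i))"
  by (simp add: mtrace_def sum_component) (rule sum.swap)

lemma mtrace_mult_commute: "mtrace (A ** B) = mtrace (B ** (A::'n::finite cmat))"
  unfolding mtrace_def matrix_mult_nth by (subst sum.swap) (simp add: mult.commute)

lemma mtrace_mult_adj_self: "mtrace (M ** adj M) = complex_of_real ((norm M)^2)"
proof -
  have "(M ** adj M)$k$k = cinner (M$k) (M$k)" for k
    by (simp add: matrix_mult_nth cinner_def mult.commute)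
  then show ?thesis by (simp add: mtrace_def cinner_self norm_vec_power2[of M])
qed

lemma matrix_add_rdistrib: "(B + C) ** (A::'n::finite cmat) = B ** A + C ** A"
  by (simp add: vec_eq_iff matrix_mult_nth sum.distrib distrib_right)

lemma unitary_right: "unitary U \<Longrightarrow> U ** adj U = mat 1"
  unfolding unitary_def using matrix_left_right_inverse by blast
lemma unitary_adj: "unitary U \<Longrightarrow> unitary (adj U)"
  unfolding unitary_def using unitary_right[unfolded unitary_def] by simp
lemma unitary_mat1: "unitary (mat 1)"
  by (simp add: unitary_def)

lemma norm_unitary_matrix_vector_mult: assumes "unitary U" shows "norm (U *v x) = norm x"
proof (rule norm_eq_of_power2_eq)
  have "(norm (U *v x))^2 = Re (cinner x (adj U *v (U *v x)))"
    by (simp add: cinner_matrix_vector_mult[symmetric] cinner_self)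
  also have "\<dots> = (norm x)^2"
    using assms by (simp add: matrix_vector_mul_assoc unitary_def cinner_self)
  finally show "(norm (U *v x))^2 = (norm x)^2" .
qed

lemma norm_unitary_mult_left: assumes "unitary U" shows "norm (U ** M) = norm M"
  by (rule norm_eq_of_power2_eq)
     (simp add: norm_mat_power2_columns column_matrix_mult norm_unitary_matrix_vector_mult[OF assms])

lemma norm_unitary_mult_right:
  fixes M :: "complex^'n::finite^'n" assumes "unitary U" shows "norm (M ** U) = norm M"
  using norm_unitary_mult_left[OF unitary_adj[OF assms], of "adj M"]
  by (metis adj_matrix_mult norm_adj)

lemma cdiag_mult_nth: "(cdiag a ** M)$i$j = a$i * M$i$j"
proof -
  have "(cdiag a ** M)$i$j = (\<Sum>k\<in>UNIV. if k = i then a$i * M$i$j else 0)"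
    unfolding matrix_mult_nth cdiag_def by (rule sum.cong) auto
  then show ?thesis by simp
qed

lemma mult_cdiag_nth: "(M ** cdiag a)$i$j = M$i$j * a$j"
proof -
  have "(M ** cdiag a)$i$j = (\<Sum>k\<in>UNIV. if k = j then M$i$j * a$j else 0)"
    unfolding matrix_mult_nth cdiag_def by (rule sum.cong) auto
  then show ?thesis by simp
qed

lemma cdiag_matrix_vector_mult_nth: "(cdiag a *v w)$i = a$i * w$i"
proof -
  have "(cdiag a *v w)$i = (\<Sum>j\<in>UNIV. if j = i then a$i * w$i else 0)"
    unfolding matrix_vector_mult_nth cdiag_def by (rule sum.cong) auto
  then show ?thesis by simp
qed

lemma cdiag_mult_cdiag: "cdiag a ** cdiag b = cdiag (\<chi> k. a$k * b$k)"
  by (simp add: vec_eq_iff cdiag_mult_nth) (simp add: cdiag_def)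

lemma diagm_eq_cdiag: "diagm s = cdiag (\<chi> i. complex_of_real (s$i))"
  by (simp add: diagm_def cdiag_def vec_eq_iff)

lemma norm_cdiag_power2: "(norm (cdiag a))^2 = (\<Sum>i\<in>UNIV. (cmod (a$i))^2)"
proof -
  have "(norm (cdiag a))^2 = (\<Sum>i\<in>UNIV. \<Sum>j\<in>UNIV. if j = i then (cmod (a$i))^2 else 0)"
    unfolding norm_mat_power2 cdiag_def by (intro sum.cong) auto
  then show ?thesis by simp
qed

lemma norm_cdiag_matrix_vector_mult_le:
  assumes "\<And>k. cmod (a$k) \<le> c"
  shows "norm (cdiag a *v (w::complex^'n::finite)) \<le> c * norm w"
proof -
  have "(norm (cdiag a *v w))^2 = (\<Sum>i\<in>UNIV. (cmod (a$i))^2 * (cmod (w$i))^2)"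
    by (simp add: norm_vec_power2 cdiag_matrix_vector_mult_nth norm_mult power_mult_distrib)
  also have "\<dots> \<le> (\<Sum>i\<in>UNIV. c^2 * (cmod (w$i))^2)"
    by (intro sum_mono mult_right_mono power_mono assms) auto
  also have "\<dots> = (c * norm w)^2"
    by (simp add: norm_vec_power2[of w] sum_distrib_left power_mult_distrib)
  finally show ?thesis
    by (rule norm_le_of_power2_le) (simp add: order_trans[OF norm_ge_zero assms])
qed

lemma norm_cdiag_mult_le:
  assumes "\<And>i. cmod (a$i) \<le> c"
  shows "norm (cdiag a ** M) \<le> c * norm M"
proof -
  have "(norm (cdiag a ** M))^2 = (\<Sum>j\<in>UNIV. (norm (cdiag a *v column j M))^2)"
    by (simp add: norm_mat_power2_columns column_matrix_mult)
  also have "\<dots> \<le> (\<Sum>j\<in>UNIV. c^2 * (norm (column j M))^2)"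
    by (rule sum_mono) (metis norm_cdiag_matrix_vector_mult_le[OF assms] norm_ge_zero power_mono
        power_mult_distrib)
  also have "\<dots> = (c * norm M)^2"
    by (simp add: norm_mat_power2_columns[of M] sum_distrib_left power_mult_distrib)
  finally show ?thesis
    by (rule norm_le_of_power2_le) (simp add: order_trans[OF norm_ge_zero assms])
qed

lemma adj_cdiag: "adj (cdiag a) = cdiag (\<chi> k. cnj (a$k))"
  by (simp add: vec_eq_iff cdiag_def)

lemma norm_mult_cdiag_le:
  assumes "\<And>i. cmod (a$i) \<le> c"
  shows "norm (M ** cdiag a) \<le> c * norm (M::'n::finite cmat)"
  using norm_cdiag_mult_le[of "\<chi> k. cnj (a$k)" c "adj M"] assms
  by (metis adj_cdiag adj_matrix_mult complex_mod_cnj norm_adj vec_lambda_beta)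

section \<open>Singular value decompositions\<close>

definition orthonormal_on :: "('k \<Rightarrow> complex^'n::finite) \<Rightarrow> 'k set \<Rightarrow> bool" where
  "orthonormal_on f A \<longleftrightarrow> (\<forall>j\<in>A. \<forall>k\<in>A. cinner (f j) (f k) = (if j = k then 1 else 0))"

definition matrix_of_columns :: "('n \<Rightarrow> complex^'n) \<Rightarrow> 'n::finite cmat" where
  "matrix_of_columns f = (\<chi> i k. f k $ i)"

lemma unitary_matrix_of_columns: "orthonormal_on f UNIV \<Longrightarrow> unitary (matrix_of_columns f)"
  unfolding unitary_def orthonormal_on_def
  by (simp add: vec_eq_iff matrix_mult_nth matrix_of_columns_def cinner_def mat_def)

lemma orthonormal_on_insert:
  assumes "orthonormal_on f K" "a \<notin> K" "norm v = 1" "\<forall>k\<in>K. cinner (f k) v = 0"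
  shows "orthonormal_on (f(a := v)) (insert a K)"
proof -
  have "cinner v v = 1" using assms(3) by (simp add: cinner_self)
  moreover have "cinner v (f k) = 0" if "k \<in> K" for k
    using assms(4) that cinner_eq_0_commute by blast
  ultimately show ?thesis
    using assms(1,2,4) unfolding orthonormal_on_def by auto
qed

lemma exists_unit_orthogonal:
  fixes h :: "'k \<Rightarrow> complex^'n::finite"
  assumes "finite J" "card J < CARD('n)"
  shows "\<exists>w. norm w = 1 \<and> (\<forall>j\<in>J. cinner (h j) w = 0)"
proof -
  \<comment> \<open>Work in the real space \<open>\<real>\<^sup>2\<^sup>n\<close>: \<open>cinner u w = 0\<close> iff \<open>w\<close> is real-orthogonal to \<open>u\<close> and \<open>\<i> u\<close>.\<close>
  let ?B = "h ` J \<union> (\<lambda>j. \<i> *s h j) ` J"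
  have "card ?B \<le> card (h ` J) + card ((\<lambda>j. \<i> *s h j) ` J)" by (rule card_Un_le)
  also have "\<dots> \<le> card J + card J" by (intro add_mono card_image_le assms(1))
  finally have "card ?B < DIM(complex^'n)" using assms(2) by simp
  moreover have "dim ?B \<le> card ?B" using assms(1) by (intro dim_le_card') simp
  ultimately have "dim ?B < DIM(complex^'n)" by linarith
  then obtain z :: "complex^'n" where z0: "z \<noteq> 0" and zo: "\<And>y. y \<in> span ?B \<Longrightarrow> orthogonal z y"
    by (rule orthogonal_to_subspace_exists) blast
  define w where "w = complex_of_real (1 / norm z) *s z"
  have "norm w = 1" using z0 by (simp add: w_def norm_scalar_mult_vec norm_divide)
  moreover have "cinner (h j) w = 0" if "j \<in> J" for j
  proof -
    have "orthogonal z (h j)" "orthogonal z (\<i> *s h j)" using zo that by (auto intro: span_base)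
    then have "inner (h j) z = 0" "inner (\<i> *s h j) z = 0"
      by (auto simp: orthogonal_def inner_commute)
    then have "cinner (h j) z = 0" by (simp add: complex_eq_iff Re_cinner Im_cinner)
    then show ?thesis by (simp add: w_def cinner_scale_right)
  qed
  ultimately show ?thesis by blast
qed

text \<open>First-order condition for a unit vector \<open>v\<close> maximising \<open>\<parallel>x w\<parallel>/\<parallel>w\<parallel>\<close> on a complex subspace \<open>M\<close>:
  comparing \<open>v\<close> with \<open>v + t w\<close> for real \<open>t\<close> shows that the derivative \<open>Re \<langle>x v, x w\<rangle>\<close> vanishes,
  and replacing \<open>w\<close> by \<open>\<i> w\<close> kills the imaginary part.\<close>

lemma maximal_stretch_orthogonal:
  fixes x :: "'n::finite cmat"
  assumes scale: "\<And>c w. w \<in> M \<Longrightarrow> c *s w \<in> M" and add: "\<And>w u. w \<in> M \<Longrightarrow> u \<in> M \<Longrightarrow> w + u \<in> M"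
    and v: "v \<in> M" "norm v = 1"
    and max: "\<And>w. w \<in> M \<Longrightarrow> norm (x *v w) \<le> norm (x *v v) * norm w"
    and w: "w \<in> M" "cinner v w = 0"
  shows "cinner (x *v v) (x *v w) = 0"
proof -
  define \<sigma> where "\<sigma> = norm (x *v v)"
  have Re0: "Re (cinner (x *v v) (x *v w)) = 0" if wM: "w \<in> M" and wv: "cinner v w = 0" for w
  proof -
    define c where "c = Re (cinner (x *v v) (x *v w))"
    define D where "D = \<sigma>^2 * (norm w)^2 - (norm (x *v w))^2"
    have "(norm (x *v w))^2 \<le> (\<sigma> * norm w)^2"
      using max[OF wM] by (intro power_mono) (auto simp: \<sigma>_def)
    then have D0: "0 \<le> D" by (simp add: D_def power_mult_distrib)
    have key: "2 * t * c \<le> t^2 * D" for t :: real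
    proof -
      let ?u = "v + complex_of_real t *s w"
      have "?u \<in> M" using v wM scale add by blast
      then have "(norm (x *v ?u))^2 \<le> (\<sigma> * norm ?u)^2"
        using max by (intro power_mono) (auto simp: \<sigma>_def)
      moreover have "(norm ?u)^2 = 1 + t^2 * (norm w)^2"
        by (simp add: norm_add_power2 cinner_scale_right wv v norm_scalar_mult_vec power_mult_distrib)
      moreover have "(norm (x *v ?u))^2 = \<sigma>^2 + 2 * t * c + t^2 * (norm (x *v w))^2"
        by (simp add: matrix_vector_right_distrib vector_scalar_commute norm_add_power2
            cinner_scale_right \<sigma>_def c_def norm_scalar_mult_vec power_mult_distrib)
      ultimately show ?thesis by (simp add: D_def power_mult_distrib algebra_simps)
    qed
    define t where "t = c / (D + 1)"
    have ct: "c = t * (D + 1)" using D0 by (simp add: t_def)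
    have "t^2 * (D + 2) \<le> 0"
      using key[of t] by (simp add: ct algebra_simps power2_eq_square)
    then have "t = 0" using D0 by (simp add: mult_le_0_iff)
    then show ?thesis using ct unfolding c_def by simp
  qed
  have "Re (cinner (x *v v) (x *v (\<i> *s w))) = 0"
    using scale[OF w(1)] w(2) by (intro Re0) (simp_all add: cinner_scale_right)
  then have "Im (cinner (x *v v) (x *v w)) = 0" by (simp add: vector_scalar_commute cinner_scale_right)
  with Re0[OF w] show ?thesis by (simp add: complex_eq_iff)
qed

lemma exists_maximal_stretch:
  fixes x :: "'n::finite cmat"
  assumes "closed M" and scale: "\<And>c w. w \<in> M \<Longrightarrow> c *s w \<in> M" and "w0 \<in> M" "norm w0 = 1"
  shows "\<exists>v\<in>M. norm v = 1 \<and> (\<forall>w\<in>M. norm (x *v w) \<le> norm (x *v v) * norm w)"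
proof -
  define C where "C = M \<inter> sphere 0 1"
  have "compact C" unfolding C_def by (rule closed_Int_compact[OF assms(1) compact_sphere])
  moreover have "C \<noteq> {}" using assms(3,4) by (auto simp: C_def)
  moreover have "continuous_on C (\<lambda>w. norm (x *v w))"
    by (intro continuous_on_norm linear_continuous_on matrix_vector_mul_bounded_linear)
  ultimately obtain v where vC: "v \<in> C" and vmax: "\<forall>y\<in>C. norm (x *v y) \<le> norm (x *v v)"
    using continuous_attains_sup by blast
  have "norm (x *v w) \<le> norm (x *v v) * norm w" if "w \<in> M" for w
  proof (cases "w = 0")
    case False
    let ?c = "complex_of_real (1 / norm w)"
    have "?c *s w \<in> C" using False scale[OF that] by (simp add: C_def norm_scalar_mult_vec norm_divide)
    then have "norm (x *v (?c *s w)) \<le> norm (x *v v)" using vmax by blast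
    then have "(1 / norm w) * norm (x *v w) \<le> norm (x *v v)"
      by (simp add: vector_scalar_commute norm_scalar_mult_vec norm_divide)
    then show ?thesis using False by (simp add: field_simps)
  qed simp
  then show ?thesis using vC by (auto simp: C_def)
qed

lemma cinner_orthogonal_residual:
  assumes "orthonormal_on f K" "finite K" "j \<in> K"
  shows "cinner (f j) (w - (\<Sum>k\<in>K. cinner (f k) w *s f k)) = 0"
proof -
  have "cinner (f j) (w - (\<Sum>k\<in>K. cinner (f k) w *s f k))
        = cinner (f j) w - (\<Sum>k\<in>K. cinner (f k) w * (if j = k then 1 else 0))"
    unfolding cinner_diff_right cinner_sum_right cinner_scale_right
    using assms(1,3) by (simp add: orthonormal_on_def)
  also have "\<dots> = 0" using assms(2,3) by (simp add: if_distrib cong: if_cong)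
  finally show ?thesis .
qed

text \<open>Right singular vectors are found greedily: the next one maximises the stretch on the
  orthogonal complement of the previous ones.\<close>

lemma exists_next_singular_vector:
  fixes x :: "'n::finite cmat" and f :: "'n \<Rightarrow> complex^'n"
  assumes fON: "orthonormal_on f K" and K: "finite K" "a \<notin> K"
    and fP: "\<forall>k\<in>K. \<forall>w. cinner w (f k) = 0 \<longrightarrow> cinner (x *v w) (x *v f k) = 0"
  shows "\<exists>v. orthonormal_on (f(a := v)) (insert a K) \<and>
           (\<forall>w. cinner w v = 0 \<longrightarrow> cinner (x *v w) (x *v v) = 0)"
proof -
  define M where "M = {w. \<forall>k\<in>K. cinner (f k) w = 0}"
  have scale: "c *s w \<in> M" if "w \<in> M" for c w using that by (auto simp: M_def cinner_scale_right)
  have add: "w + u \<in> M" if "w \<in> M" "u \<in> M" for w u using that by (auto simp: M_def cinner_add_right)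
  have "closed M"
  proof -
    have "closed {w. cinner (f k) w = 0}" for k
      by (rule closed_Collect_eq) (simp_all add: cinner_def continuous_intros)
    then show ?thesis by (simp add: M_def Collect_ball_eq closed_INT)
  qed
  moreover have "card K < CARD('n)"
    using card_mono[of UNIV "insert a K"] K by simp
  then obtain w0 where "w0 \<in> M" "norm w0 = 1"
    using exists_unit_orthogonal[OF K(1)] by (auto simp: M_def)
  ultimately obtain v where vM: "v \<in> M" and vn: "norm v = 1"
    and vmax: "\<forall>w\<in>M. norm (x *v w) \<le> norm (x *v v) * norm w"
    using exists_maximal_stretch[of M] scale by blast
  have vK: "cinner v (f k) = 0" if "k \<in> K" for k
    using vM that by (simp add: M_def cinner_eq_0_commute)
  have "cinner (x *v w) (x *v v) = 0" if wv: "cinner w v = 0" for w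
  proof -
    define wM where "wM = w - (\<Sum>k\<in>K. cinner (f k) w *s f k)"
    have "wM \<in> M" using cinner_orthogonal_residual[OF fON K(1)] by (simp add: M_def wM_def)
    moreover have "cinner v wM = 0"
      using wv vK unfolding wM_def cinner_diff_right cinner_sum_right cinner_scale_right
      by (simp add: cinner_eq_0_commute)
    ultimately have "cinner (x *v v) (x *v wM) = 0"
      using maximal_stretch_orthogonal[OF scale add vM vn] vmax by blast
    then have "cinner (x *v wM) (x *v v) = 0" by (simp add: cinner_eq_0_commute)
    moreover have "cinner (x *v f k) (x *v v) = 0" if "k \<in> K" for k
      using fP vK that cinner_eq_0_commute by blast
    moreover have "x *v w = x *v wM + (\<Sum>k\<in>K. cinner (f k) w *s (x *v f k))"
      by (simp add: wM_def matrix_vector_mult_diff_distrib matrix_vector_mult_sum vector_scalar_commute)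
    ultimately show ?thesis
      by (simp add: cinner_add_left cinner_sum_left cinner_scale_left)
  qed
  moreover have "orthonormal_on (f(a := v)) (insert a K)"
    using orthonormal_on_insert[OF fON K(2) vn] vM by (simp add: M_def)
  ultimately show ?thesis by blast
qed

lemma exists_orthonormal_basis_orthogonal_image:
  fixes x :: "'n::finite cmat"
  shows "\<exists>f::'n \<Rightarrow> complex^'n. orthonormal_on f UNIV \<and>
           (\<forall>j k. j \<noteq> k \<longrightarrow> cinner (x *v f j) (x *v f k) = 0)"
proof -
  have "\<exists>f. orthonormal_on f K \<and> (\<forall>k\<in>K. \<forall>w. cinner w (f k) = 0 \<longrightarrow> cinner (x *v w) (x *v f k) = 0)"
    if "finite K" for K :: "'n set"
    using that
  proof (induction K rule: finite_induct)
    case (insert a K)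
    then obtain f where "orthonormal_on f K"
      and fP: "\<forall>k\<in>K. \<forall>w. cinner w (f k) = 0 \<longrightarrow> cinner (x *v w) (x *v f k) = 0" by blast
    with exists_next_singular_vector[OF this(1) insert(1,2) fP] obtain v
      where "orthonormal_on (f(a := v)) (insert a K)"
        and v: "\<forall>w. cinner w v = 0 \<longrightarrow> cinner (x *v w) (x *v v) = 0" by blast
    moreover have "\<forall>k\<in>insert a K. \<forall>w. cinner w ((f(a := v)) k) = 0 \<longrightarrow>
                     cinner (x *v w) (x *v (f(a := v)) k) = 0"
      using fP v insert(2) by auto
    ultimately show ?case by blast
  qed (simp add: orthonormal_on_def)
  from this[of UNIV] obtain f :: "'n \<Rightarrow> complex^'n" where f1: "orthonormal_on f UNIV"
    and f2: "\<forall>k w. cinner w (f k) = 0 \<longrightarrow> cinner (x *v w) (x *v f k) = 0" by auto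
  have "cinner (x *v f j) (x *v f k) = 0" if "j \<noteq> k" for j k
    using f1 f2 that unfolding orthonormal_on_def by auto
  with f1 show ?thesis by blast
qed

lemma orthonormal_extend:
  fixes f :: "'n::finite \<Rightarrow> complex^'n"
  assumes "orthonormal_on f P"
  shows "\<exists>g. (\<forall>k\<in>P. g k = f k) \<and> orthonormal_on g UNIV"
proof -
  have "\<exists>g. (\<forall>k\<in>P. g k = f k) \<and> orthonormal_on g (P \<union> K)" if "finite K" for K
    using that
  proof (induction K rule: finite_induct)
    case empty show ?case using assms by auto
  next
    case (insert a K)
    then obtain g where g1: "\<forall>k\<in>P. g k = f k" and g2: "orthonormal_on g (P \<union> K)" by blast
    show ?case
    proof (cases "a \<in> P \<union> K")
      case True
      then have "P \<union> insert a K = P \<union> K" by auto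
      then show ?thesis using g1 g2 by auto
    next
      case False
      then have "card (P \<union> K) < CARD('n)" using psubset_card_mono[of UNIV "P \<union> K"] by auto
      then obtain w where "norm w = 1" "\<forall>j\<in>P \<union> K. cinner (g j) w = 0"
        using exists_unit_orthogonal[of "P \<union> K" g] by auto
      then have "orthonormal_on (g(a := w)) (P \<union> insert a K)"
        using orthonormal_on_insert[OF g2 False] by simp
      moreover have "\<forall>k\<in>P. (g(a := w)) k = f k" using g1 False by auto
      ultimately show ?thesis by blast
    qed
  qed
  from this[of UNIV] show ?thesis by auto
qed

lemma sing_vals_exist: "\<exists>s. sing_vals (x::'n::finite cmat) s"
proof -
  obtain f :: "'n \<Rightarrow> complex^'n" where fON: "orthonormal_on f UNIV"
    and fo: "\<forall>j k. j \<noteq> k \<longrightarrow> cinner (x *v f j) (x *v f k) = 0"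
    using exists_orthonormal_basis_orthogonal_image by blast
  define s where "s k = norm (x *v f k)" for k
  define P where "P = {k. s k \<noteq> 0}"
  define g0 where "g0 k = complex_of_real (1 / s k) *s (x *v f k)" for k
  have "orthonormal_on g0 P"
    unfolding orthonormal_on_def
  proof (intro ballI)
    fix j k assume "j \<in> P" "k \<in> P"
    then have "s j \<noteq> 0" "s k \<noteq> 0" by (auto simp: P_def)
    then show "cinner (g0 j) (g0 k) = (if j = k then 1 else 0)"
      using fo by (simp add: g0_def cinner_scale_right cinner_scale_left cinner_self s_def
          power2_eq_square)
  qed
  then obtain g where gP: "\<forall>k\<in>P. g k = g0 k" and gON: "orthonormal_on g UNIV"
    using orthonormal_extend by blast
  define V where "V = matrix_of_columns f"
  define U where "U = matrix_of_columns g"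
  define sv where "sv = (\<chi> k. s k)"
  have V: "unitary V" and U: "unitary U"
    using fON gON unitary_matrix_of_columns by (auto simp: V_def U_def)
  have "(x ** V)$i$k = (U ** diagm sv)$i$k" for i k
  proof -
    have "(x ** V)$i$k = (x *v f k) $ i" by (simp add: matrix_mult_nth V_def matrix_of_columns_def
          matrix_vector_mult_nth)
    moreover have "(U ** diagm sv)$i$k = g k $ i * complex_of_real (s k)"
      by (simp add: diagm_eq_cdiag mult_cdiag_nth U_def matrix_of_columns_def sv_def)
    ultimately show ?thesis using gP by (cases "k \<in> P") (simp_all add: g0_def P_def s_def)
  qed
  then have "x ** V = U ** diagm sv" by (simp add: vec_eq_iff)
  then have "x = U ** diagm sv ** adj V"
    by (metis matrix_mul_assoc matrix_mul_rid unitary_right[OF V])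
  then have "sing_vals x sv"
    unfolding sing_vals_def using U unitary_adj[OF V] by (auto simp: sv_def s_def)
  then show ?thesis by blast
qed

section \<open>Coefficient sequences and the row, column and minimal norms\<close>

lemma l2norm_power2: assumes "l2seq Y" shows "(l2norm Y)^2 = (\<Sum>i. (norm (Y i))^2)"
  using assms by (simp add: l2norm_def l2seq_def suminf_nonneg)

lemma l2norm_nonneg: "l2seq Y \<Longrightarrow> 0 \<le> l2norm Y"
  by (simp add: l2norm_def l2seq_def suminf_nonneg)

lemma l2seq_adj: "l2seq Y \<Longrightarrow> l2seq (\<lambda>i. adj (Y i))"
  by (simp add: l2seq_def)

lemma l2norm_adj: "l2norm (\<lambda>i. adj (Y i)) = l2norm Y"
  by (simp add: l2norm_def)

lemma l2seq_finite_support: "finite {i. Y i \<noteq> 0} \<Longrightarrow> l2seq Y"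
  unfolding l2seq_def by (rule summable_finite) auto

lemma l2seq_diff: assumes "l2seq X" "l2seq Y" shows "l2seq (\<lambda>i. X i - Y i)"
  unfolding l2seq_def
proof (rule summable_comparison_test'[where g = "\<lambda>i. 2 * (norm (X i))^2 + 2 * (norm (Y i))^2"])
  show "summable (\<lambda>i. 2 * (norm (X i))^2 + 2 * (norm (Y i))^2)"
    using assms by (intro summable_add summable_mult) (simp_all add: l2seq_def)
  fix n :: nat
  have "(norm (X n - Y n))^2 \<le> (norm (X n) + norm (Y n))^2"
    by (intro power_mono norm_triangle_ineq4) simp
  also have "\<dots> \<le> 2 * (norm (X n))^2 + 2 * (norm (Y n))^2"
    using sum_squares_bound[of "norm (X n)" "norm (Y n)"] by (simp add: power2_eq_square algebra_simps)
  finally show "norm ((norm (X n - Y n))^2) \<le> 2 * (norm (X n))^2 + 2 * (norm (Y n))^2" by simp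
qed

lemma norm_le_l2norm: assumes "l2seq Y" shows "norm (Y i) \<le> l2norm Y"
proof -
  have "(\<Sum>j\<in>{i}. (norm (Y j))^2) \<le> (\<Sum>j. (norm (Y j))^2)"
    using assms by (intro sum_le_suminf) (auto simp: l2seq_def)
  then show ?thesis by (intro norm_le_of_power2_le) (simp_all add: l2norm_power2[OF assms] l2norm_nonneg[OF assms])
qed

definition bounded_on_l2_balls :: "((nat \<Rightarrow> 'n::finite cmat) \<Rightarrow> real) \<Rightarrow> bool" where
  "bounded_on_l2_balls N \<longleftrightarrow> (\<forall>r. \<exists>C. \<forall>Y. l2seq Y \<and> l2norm Y \<le> r \<longrightarrow> N Y \<le> C)"

lemma bounded_on_l2_ballsI:
  assumes "\<And>Y. l2seq Y \<Longrightarrow> N Y \<le> f (l2norm Y)" and "mono f"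
  shows "bounded_on_l2_balls N"
  unfolding bounded_on_l2_balls_def using assms by (meson monoD order_trans)

lemma bounded_on_l2_ballsE:
  assumes "bounded_on_l2_balls N"
  obtains C where "\<And>Y. l2seq Y \<Longrightarrow> l2norm Y \<le> r \<Longrightarrow> N Y \<le> C"
  using assms unfolding bounded_on_l2_balls_def by blast

lemma summable_mult_adj: assumes "l2seq Y" shows "summable (\<lambda>i. norm (Y i ** adj (Y i)))"
proof (rule summable_comparison_test')
  show "summable (\<lambda>i. (norm (Y i))^2)" using assms by (simp add: l2seq_def)
  show "norm (norm (Y n ** adj (Y n))) \<le> (norm (Y n))^2" for n
    using norm_matrix_mult_le[of "Y n" "adj (Y n)"] by (simp add: power2_eq_square)
qed

lemma cmod_mtrace_conj_le:
  assumes "\<And>x. norm (M *v x) \<le> N * norm x"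
  shows "cmod (mtrace (A ** M ** adj A)) \<le> N * (norm A)^2"
proof -
  define a where "a k = (\<chi> j. cnj (A$k$j))" for k
  have "(A ** M ** adj A)$k$k = cinner (a k) (M *v a k)" for k
    by (simp add: a_def cinner_def matrix_mult_nth matrix_vector_mult_nth sum_distrib_left
        sum_distrib_right ac_simps) (rule sum.swap)
  moreover have "cmod (cinner (a k) (M *v a k)) \<le> norm (a k) * (N * norm (a k))" for k
    by (rule order_trans[OF cmod_cinner_le mult_left_mono[OF assms norm_ge_zero]])
  ultimately have "cmod (mtrace (A ** M ** adj A)) \<le> (\<Sum>k\<in>UNIV. norm (a k) * (N * norm (a k)))"
    unfolding mtrace_def by (intro order_trans[OF norm_sum] sum_mono) simp
  also have "\<dots> = N * (norm A)^2"
    by (simp add: a_def norm_vec_power2[of A] sum_distrib_left power2_eq_square norm_vec_sqrt ac_simps)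
  finally show ?thesis .
qed

text \<open>\<open>\<parallel>A Z\<parallel>\<^sub>2\<^sup>2 = Re tr (A (Z Z\<^sup>*) A\<^sup>*)\<close> is a bounded linear functional of \<open>Z Z\<^sup>*\<close>, so it
  commutes with the infinite sum \<open>\<Sum>\<^sub>i Y\<^sub>i Y\<^sub>i\<^sup>*\<close>.\<close>

lemma sum_norm_mult_power2_le:
  fixes A :: "'n::finite cmat" and Y :: "nat \<Rightarrow> 'n cmat"
  assumes Y: "l2seq Y" and S: "finite S"
  shows "(\<Sum>i\<in>S. (norm (A ** Y i))^2) \<le> (norm A)^2 * opnorm (\<Sum>i. Y i ** adj (Y i))"
proof -
  define L where "L M = Re (mtrace (A ** M ** adj A))" for M
  have bl: "bounded_linear L"
  proof (rule bounded_linear_intro[where K = "(norm A)^2"])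
    show "L (M + N) = L M + L N" for M N
      by (simp add: L_def matrix_add_ldistrib matrix_add_rdistrib mtrace_add)
    show "L (c *\<^sub>R M) = c *\<^sub>R L M" for c M
      by (simp add: L_def matrix_scalar_ac scalar_matrix_assoc[symmetric] mtrace_scaleR)
    show "norm (L M) \<le> norm M * (norm A)^2" for M
      unfolding L_def real_norm_def
      using cmod_mtrace_conj_le[OF norm_matrix_vector_mult_le] abs_Re_le_cmod order_trans by blast
  qed
  have key: "(norm (A ** Z))^2 = L (Z ** adj Z)" for Z :: "'n cmat"
    using mtrace_mult_adj_self[of "A ** Z"] by (simp add: L_def adj_matrix_mult matrix_mul_assoc)
  have sm: "summable (\<lambda>i. Y i ** adj (Y i))"
    by (rule summable_norm_cancel[OF summable_mult_adj[OF Y]])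
  have "(\<Sum>i\<in>S. (norm (A ** Y i))^2) = (\<Sum>i\<in>S. L (Y i ** adj (Y i)))" by (simp add: key)
  also have "\<dots> \<le> (\<Sum>i. L (Y i ** adj (Y i)))"
    by (rule sum_le_suminf[OF bounded_linear.summable[OF bl sm] S]) (simp add: key[symmetric])
  also have "\<dots> = L (\<Sum>i. Y i ** adj (Y i))" by (rule bounded_linear.suminf[OF bl sm, symmetric])
  also have "\<dots> \<le> opnorm (\<Sum>i. Y i ** adj (Y i)) * (norm A)^2"
    unfolding L_def using cmod_mtrace_conj_le[OF norm_matrix_vector_mult_opnorm] abs_Re_le_cmod
    by (meson abs_le_D1 order_trans)
  finally show ?thesis by (simp add: mult.commute)
qed

lemma R_norm_le_l2norm: assumes "l2seq Y" shows "R_norm Y \<le> l2norm Y"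
proof -
  have "opnorm (\<Sum>i. Y i ** adj (Y i)) \<le> norm (\<Sum>i. Y i ** adj (Y i))" by (rule opnorm_le_norm)
  also have "\<dots> \<le> (\<Sum>i. norm (Y i ** adj (Y i)))"
    by (rule summable_norm[OF summable_mult_adj[OF assms]])
  also have "\<dots> \<le> (\<Sum>i. (norm (Y i))^2)"
    using assms by (intro suminf_le summable_mult_adj)
      (auto simp: l2seq_def power2_eq_square intro: order_trans[OF norm_matrix_mult_le])
  also have "\<dots> = (l2norm Y)^2" by (simp add: l2norm_power2[OF assms])
  finally show ?thesis
    unfolding R_norm_def using l2norm_nonneg[OF assms] real_sqrt_le_mono by fastforce
qed

lemma C_norm_eq_R_norm_adj: "C_norm Y = R_norm (\<lambda>i. adj (Y i))"
  by (simp add: C_norm_def R_norm_def)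

lemma C_norm_le_l2norm: "l2seq Y \<Longrightarrow> C_norm Y \<le> l2norm Y"
  using R_norm_le_l2norm[OF l2seq_adj] by (simp add: C_norm_eq_R_norm_adj l2norm_adj)

lemma R_norm_nonneg: "0 \<le> R_norm Y"
  by (simp add: R_norm_def opnorm_nonneg)

lemma C_norm_nonneg: "0 \<le> C_norm Y"
  by (simp add: C_norm_def opnorm_nonneg)

lemma bounded_on_l2_balls_R_norm: "bounded_on_l2_balls R_norm"
  by (rule bounded_on_l2_ballsI[where f = id]) (simp_all add: R_norm_le_l2norm mono_def)

lemma bounded_on_l2_balls_C_norm: "bounded_on_l2_balls C_norm"
  by (rule bounded_on_l2_ballsI[where f = id]) (simp_all add: C_norm_le_l2norm mono_def)

lemma norm_msc: "norm (msc c (M::'n::finite cmat)) = cmod c * norm M"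
proof -
  have "(norm (msc c M))^2 = (cmod c * norm M)^2"
    by (simp add: norm_mat_power2 msc_def norm_mult power_mult_distrib sum_distrib_left)
  then show ?thesis by (metis norm_ge_zero zero_le_mult_iff power2_eq_iff_nonneg)
qed

lemma msc_matrix_vector_mult: "msc c (M::'n::finite cmat) *v x = c *s (M *v x)"
  by (simp add: vec_eq_iff msc_def matrix_vector_mult_nth sum_distrib_left mult.assoc)

lemma opnorm_suminf_msc_le:
  assumes X: "l2seq X" and v: "summable (\<lambda>i. (cmod (v i))^2)" "(\<Sum>i. (cmod (v i))^2) = 1"
  shows "opnorm (\<Sum>i. msc (v i) (X i)) \<le> (1 + (l2norm X)^2) / 2"
proof -
  have am_gm: "norm (msc (v i) (X i)) \<le> ((cmod (v i))^2 + (norm (X i))^2) / 2" for i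
    using sum_squares_bound[of "cmod (v i)" "norm (X i)"] by (simp add: norm_msc power2_eq_square)
  have s2: "summable (\<lambda>i. ((cmod (v i))^2 + (norm (X i))^2) / 2)"
    using X v by (intro summable_divide summable_add) (simp_all add: l2seq_def)
  have s1: "summable (\<lambda>i. norm (msc (v i) (X i)))"
    by (rule summable_comparison_test'[OF s2]) (metis am_gm norm_ge_zero real_norm_def abs_of_nonneg)
  have "opnorm (\<Sum>i. msc (v i) (X i)) \<le> norm (\<Sum>i. msc (v i) (X i))" by (rule opnorm_le_norm)
  also have "\<dots> \<le> (\<Sum>i. norm (msc (v i) (X i)))" by (rule summable_norm[OF s1])
  also have "\<dots> \<le> (\<Sum>i. ((cmod (v i))^2 + (norm (X i))^2) / 2)"
    by (rule suminf_le[OF am_gm s1 s2])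
  also have "\<dots> = (1 + (l2norm X)^2) / 2"
    using suminf_divide[OF summable_add[OF v(1), of "\<lambda>i. (norm (X i))^2"], of 2]
      suminf_add[OF v(1), of "\<lambda>i. (norm (X i))^2"] X v(2)
    by (simp add: l2seq_def l2norm_power2)
  finally show ?thesis .
qed

lemma opnorm_le_min_norm:
  assumes X: "l2seq X" and v: "summable (\<lambda>i. (cmod (v i))^2)" "(\<Sum>i. (cmod (v i))^2) = 1"
  shows "opnorm (\<Sum>i. msc (v i) (X i)) \<le> min_norm X"
  unfolding min_norm_def
proof (rule cSup_upper)
  show "bdd_above {opnorm (\<Sum>i. msc (v i) (X i)) | v.
          summable (\<lambda>i. (cmod (v i))^2) \<and> (\<Sum>i. (cmod (v i))^2) = 1}"
    using opnorm_suminf_msc_le[OF X] by (auto intro!: bdd_aboveI[where M = "(1 + (l2norm X)^2) / 2"])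
qed (use v in blast)

lemma unit_vector_l2: "summable (\<lambda>i. (cmod (if i = (0::nat) then (1::complex) else 0))^2) \<and>
   (\<Sum>i. (cmod (if i = (0::nat) then (1::complex) else 0))^2) = 1"
proof
  show "summable (\<lambda>i. (cmod (if i = (0::nat) then (1::complex) else 0))^2)"
    by (rule summable_finite[of "{0}"]) auto
  show "(\<Sum>i. (cmod (if i = (0::nat) then (1::complex) else 0))^2) = 1"
    by (subst suminf_finite[of "{0}"]) auto
qed

lemma min_norm_nonneg: "l2seq X \<Longrightarrow> 0 \<le> min_norm X"
  using opnorm_le_min_norm[OF _ conjunct1[OF unit_vector_l2] conjunct2[OF unit_vector_l2]]
    opnorm_nonneg order_trans by blast

lemma min_norm_le: "l2seq X \<Longrightarrow> min_norm X \<le> (1 + (l2norm X)^2) / 2"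
  unfolding min_norm_def
  by (rule cSup_least) (use unit_vector_l2 opnorm_suminf_msc_le in auto)

lemma bounded_on_l2_balls_min_norm: "bounded_on_l2_balls min_norm"
proof (rule bounded_on_l2_ballsI)
  show "mono (\<lambda>r::real. (1 + (max 0 r)^2) / 2)"
    by (auto simp: mono_def intro!: divide_right_mono power_mono)
  show "min_norm Y \<le> (1 + (max 0 (l2norm Y))^2) / 2" if "l2seq Y" for Y
    using min_norm_le[OF that] l2norm_nonneg[OF that] by (simp add: max_absorb2)
qed

text \<open>Testing the minimal norm with the unit vector \<open>v = \<gamma>\<^sup>*/\<parallel>\<gamma>\<parallel>\<close> dual to
  \<open>\<gamma>\<^sub>i = \<langle>r, X\<^sub>i c\<rangle>\<close>.\<close>

lemma sum_cinner_power2_le_min_norm: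
  fixes r c :: "complex^'n::finite" and X :: "nat \<Rightarrow> 'n cmat"
  assumes X: "l2seq X" and S: "finite S"
  shows "(\<Sum>i\<in>S. (cmod (cinner r (X i *v c)))^2) \<le> (norm r * norm c * min_norm X)^2"
proof -
  define \<gamma> where "\<gamma> i = cinner r (X i *v c)" for i
  define G where "G = sqrt (\<Sum>i\<in>S. (cmod (\<gamma> i))^2)"
  have G0: "0 \<le> G" by (simp add: G_def sum_nonneg)
  have G2: "G^2 = (\<Sum>i\<in>S. (cmod (\<gamma> i))^2)" by (simp add: G_def sum_nonneg)
  have "G \<le> norm r * norm c * min_norm X"
  proof (cases "G = 0")
    case True then show ?thesis using min_norm_nonneg[OF X] by simp
  next
    case False
    then have Gp: "0 < G" using G0 by simp
    define v where "v i = (if i \<in> S then cnj (\<gamma> i) / complex_of_real G else 0)" for i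
    have sv: "summable (\<lambda>i. (cmod (v i))^2)" by (rule summable_finite[OF S]) (simp add: v_def)
    have "(\<Sum>i. (cmod (v i))^2) = (\<Sum>i\<in>S. (cmod (\<gamma> i))^2 / G^2)"
      by (subst suminf_finite[OF S]) (simp_all add: v_def norm_divide power_divide)
    also have "\<dots> = 1" using Gp by (simp add: sum_divide_distrib[symmetric] G2[symmetric])
    finally have sv1: "(\<Sum>i. (cmod (v i))^2) = 1" .
    define Z where "Z = (\<Sum>i. msc (v i) (X i))"
    have Zeq: "Z = (\<Sum>i\<in>S. msc (v i) (X i))" unfolding Z_def
      by (rule suminf_finite[OF S]) (simp add: v_def msc_def vec_eq_iff)
    have "cinner r (Z *v c) = (\<Sum>i\<in>S. complex_of_real ((cmod (\<gamma> i))^2 / G))"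
      unfolding Zeq sum_matrix_vector_mult msc_matrix_vector_mult cinner_sum_right cinner_scale_right
    proof (rule sum.cong[OF refl])
      fix i assume "i \<in> S"
      then show "v i * cinner r (X i *v c) = complex_of_real ((cmod (\<gamma> i))^2 / G)"
        by (simp add: v_def \<gamma>_def complex_norm_square[symmetric] mult.commute)
    qed
    also have "\<dots> = complex_of_real ((\<Sum>i\<in>S. (cmod (\<gamma> i))^2) / G)"
      by (simp add: sum_divide_distrib del: of_real_power)
    also have "\<dots> = complex_of_real G"
      using Gp by (simp only: G2[symmetric]) (simp add: power2_eq_square)
    finally have "G = cmod (cinner r (Z *v c))" using G0 by simp
    also have "\<dots> \<le> norm r * (opnorm Z * norm c)"
      by (intro order_trans[OF cmod_cinner_le] mult_left_mono norm_matrix_vector_mult_opnorm) simp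
    also have "\<dots> \<le> norm r * (min_norm X * norm c)"
      using opnorm_le_min_norm[OF X sv sv1] by (intro mult_left_mono mult_right_mono) (auto simp: Z_def)
    finally show ?thesis by (simp add: ac_simps)
  qed
  then have "G^2 \<le> (norm r * norm c * min_norm X)^2" using G0 by (intro power_mono)
  then show ?thesis by (simp add: G2 \<gamma>_def)
qed

section \<open>Hilbert--Schmidt sandwiches and the endpoint estimates\<close>

text \<open>\<open>hs_sandwich S A B Y\<close> is the Hilbert--Schmidt norm of \<open>(A \<otimes> 1) Y (B \<otimes> 1)\<close>, restricted to the
  coefficients in \<open>S\<close>.\<close>

definition hs_sandwich :: "nat set \<Rightarrow> 'n::finite cmat \<Rightarrow> 'n cmat \<Rightarrow> (nat \<Rightarrow> 'n cmat) \<Rightarrow> real" where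
  "hs_sandwich S A B Y = sqrt (\<Sum>i\<in>S. (norm (A ** Y i ** B))^2)"

lemma hs_sandwich_nonneg: "0 \<le> hs_sandwich S A B Y"
  by (simp add: hs_sandwich_def sum_nonneg)

lemma hs_sandwich_le_of_power2_le:
  assumes "(\<Sum>i\<in>S. (norm (A ** Y i ** B))^2) \<le> c^2" "0 \<le> c"
  shows "hs_sandwich S A B Y \<le> c"
  using assms unfolding hs_sandwich_def by (metis real_sqrt_abs real_sqrt_le_mono abs_of_nonneg)

lemma hs_sandwich_le_min_norm:
  fixes A B :: "'n::finite cmat" and X :: "nat \<Rightarrow> 'n cmat"
  assumes X: "l2seq X" and S: "finite S"
  shows "hs_sandwich S A B X \<le> norm A * norm B * min_norm X"
proof (rule hs_sandwich_le_of_power2_le)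
  define a where "a k = (\<chi> m. cnj (A$k$m))" for k
  have entry: "(A ** X i ** B)$k$l = cinner (a k) (X i *v column l B)" for i k l
    by (simp add: a_def cinner_def matrix_mult_nth matrix_vector_mult_nth column_def
        sum_distrib_left sum_distrib_right mult.assoc) (rule sum.swap)
  have "(\<Sum>i\<in>S. (norm (A ** X i ** B))^2)
        = (\<Sum>k\<in>UNIV. \<Sum>l\<in>UNIV. \<Sum>i\<in>S. (cmod (cinner (a k) (X i *v column l B)))^2)"
    by (simp add: norm_mat_power2 entry sum.swap[of _ S] sum.swap[of _ S UNIV])
  also have "\<dots> \<le> (\<Sum>k\<in>UNIV. \<Sum>l\<in>UNIV. (norm (A$k) * norm (column l B) * min_norm X)^2)"
  proof (intro sum_mono)
    fix k l
    have "norm (a k) = norm (A$k)" by (simp add: a_def norm_vec_sqrt)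
    then show "(\<Sum>i\<in>S. (cmod (cinner (a k) (X i *v column l B)))^2)
               \<le> (norm (A$k) * norm (column l B) * min_norm X)^2"
      using sum_cinner_power2_le_min_norm[OF X S] by metis
  qed
  also have "\<dots> = (norm A * norm B * min_norm X)^2"
    by (simp add: power_mult_distrib sum_distrib_left[symmetric] sum_distrib_right[symmetric]
        norm_vec_power2[of A, symmetric] norm_mat_power2_columns[of B, symmetric])
  finally show "(\<Sum>i\<in>S. (norm (A ** X i ** B))^2) \<le> (norm A * norm B * min_norm X)^2" .
qed (simp add: min_norm_nonneg[OF X])

lemma hs_sandwich_le_R_norm:
  fixes A W :: "'n::finite cmat" and Y :: "nat \<Rightarrow> 'n cmat"
  assumes Y: "l2seq Y" and S: "finite S" and W: "unitary W" and b: "\<And>i. cmod (b$i) \<le> c"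
  shows "hs_sandwich S A (W ** cdiag b) Y \<le> norm A * c * R_norm Y"
proof (rule hs_sandwich_le_of_power2_le)
  have "norm (A ** Y i ** (W ** cdiag b)) \<le> c * norm (A ** Y i)" for i
    using norm_mult_cdiag_le[OF b, of "A ** Y i ** W"]
    by (simp add: matrix_mul_assoc norm_unitary_mult_right[OF W])
  then have "(\<Sum>i\<in>S. (norm (A ** Y i ** (W ** cdiag b)))^2) \<le> (\<Sum>i\<in>S. c^2 * (norm (A ** Y i))^2)"
    by (intro sum_mono) (metis norm_ge_zero power_mono power_mult_distrib)
  also have "\<dots> \<le> c^2 * ((norm A)^2 * opnorm (\<Sum>i. Y i ** adj (Y i)))"
    unfolding sum_distrib_left[symmetric] by (intro mult_left_mono sum_norm_mult_power2_le[OF Y S]) simp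
  finally show "(\<Sum>i\<in>S. (norm (A ** Y i ** (W ** cdiag b)))^2) \<le> (norm A * c * R_norm Y)^2"
    by (simp add: R_norm_def power_mult_distrib opnorm_nonneg ac_simps)
qed (simp add: R_norm_nonneg order_trans[OF norm_ge_zero b])

lemma hs_sandwich_le_C_norm:
  fixes B W :: "'n::finite cmat" and Y :: "nat \<Rightarrow> 'n cmat"
  assumes Y: "l2seq Y" and S: "finite S" and W: "unitary W" and a: "\<And>i. cmod (a$i) \<le> c"
  shows "hs_sandwich S (cdiag a ** W) B Y \<le> c * norm B * C_norm Y"
proof (rule hs_sandwich_le_of_power2_le)
  have "norm (cdiag a ** W ** Y i ** B) \<le> c * norm (adj B ** adj (Y i))" for i
    using norm_cdiag_mult_le[OF a, of "W ** Y i ** B"]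
    by (simp add: matrix_mul_assoc[symmetric] norm_unitary_mult_left[OF W] adj_matrix_mult[symmetric])
  then have "(\<Sum>i\<in>S. (norm (cdiag a ** W ** Y i ** B))^2)
             \<le> (\<Sum>i\<in>S. c^2 * (norm (adj B ** adj (Y i)))^2)"
    by (intro sum_mono) (metis norm_ge_zero power_mono power_mult_distrib)
  also have "\<dots> \<le> c^2 * ((norm (adj B))^2 * opnorm (\<Sum>i. adj (Y i) ** adj (adj (Y i))))"
    unfolding sum_distrib_left[symmetric]
    by (intro mult_left_mono sum_norm_mult_power2_le[OF l2seq_adj[OF Y] S]) simp
  finally show "(\<Sum>i\<in>S. (norm (cdiag a ** W ** Y i ** B))^2) \<le> (c * norm B * C_norm Y)^2"
    by (simp add: C_norm_def power_mult_distrib opnorm_nonneg)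
qed (simp add: C_norm_nonneg order_trans[OF norm_ge_zero a])

section \<open>Hadamard's three lines theorem\<close>

text \<open>The damping factor \<open>1 + d z\<close> makes \<open>g z / (1 + d z)\<close> small far out in the strip, so that the
  maximum modulus principle on a large rectangle applies.\<close>

lemma three_lines_damped_boundary:
  fixes g :: "complex \<Rightarrow> complex"
  assumes bdd: "\<And>z. z \<in> strip \<Longrightarrow> cmod (g z) \<le> C"
    and b0: "\<And>y. cmod (g (\<i> * complex_of_real y)) \<le> M"
    and b1: "\<And>y. cmod (g (1 + \<i> * complex_of_real y)) \<le> M"
    and d: "0 < d" and z: "z \<in> strip" and "Re z = 0 \<or> Re z = 1 \<or> C \<le> d * \<bar>Im z\<bar> * (M + d)"
  shows "cmod (g z / (1 + complex_of_real d * z)) \<le> M + d"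
proof -
  have "1 \<le> Re (1 + complex_of_real d * z)" using z d by (simp add: strip_def)
  then have den1: "1 \<le> cmod (1 + complex_of_real d * z)" using complex_Re_le_cmod order_trans by blast
  have den2: "d * \<bar>Im z\<bar> \<le> cmod (1 + complex_of_real d * z)"
    using abs_Im_le_cmod[of "1 + complex_of_real d * z"] d by (simp add: abs_mult)
  have le_g: "cmod (g z / (1 + complex_of_real d * z)) \<le> cmod (g z)"
    using frac_le[OF norm_ge_zero order_refl zero_less_one den1] by (simp add: norm_divide)
  consider "Re z = 0" | "Re z = 1" | "C \<le> d * \<bar>Im z\<bar> * (M + d)" using assms(6) by blast
  then show ?thesis
  proof cases
    case 1
    then have "z = \<i> * complex_of_real (Im z)" by (simp add: complex_eq_iff)
    then show ?thesis using le_g b0[of "Im z"] d by simp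
  next
    case 2
    then have "z = 1 + \<i> * complex_of_real (Im z)" by (simp add: complex_eq_iff)
    then show ?thesis using le_g b1[of "Im z"] d by simp
  next
    case 3
    show ?thesis
    proof (cases "Im z = 0")
      case True
      then show ?thesis using 3 le_g bdd[OF z] d order_trans[OF norm_ge_zero b0[of 0]] by simp
    next
      case False
      then have dI: "0 < d * \<bar>Im z\<bar>" using d by simp
      have "cmod (g z / (1 + complex_of_real d * z)) \<le> C / (d * \<bar>Im z\<bar>)"
        unfolding norm_divide
        by (rule frac_le[OF order_trans[OF norm_ge_zero bdd[OF z]] bdd[OF z] dI den2])
      also have "\<dots> \<le> M + d" using 3 dI by (simp add: divide_le_eq ac_simps)
      finally show ?thesis .
    qed
  qed
qed

lemma three_lines_damped:
  fixes g :: "complex \<Rightarrow> complex"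
  assumes hol: "g holomorphic_on {z. 0 < Re z \<and> Re z < 1}"
    and cont: "continuous_on strip g"
    and bdd: "\<And>z. z \<in> strip \<Longrightarrow> cmod (g z) \<le> C"
    and b0: "\<And>y. cmod (g (\<i> * complex_of_real y)) \<le> M"
    and b1: "\<And>y. cmod (g (1 + \<i> * complex_of_real y)) \<le> M"
    and t: "0 \<le> t" "t \<le> 1" and d: "0 < d"
  shows "cmod (g (complex_of_real t)) \<le> (M + d) * (1 + d)"
proof -
  have M0: "0 \<le> M" by (rule order_trans[OF norm_ge_zero b0[of 0]])
  have C0: "0 \<le> C" using order_trans[OF norm_ge_zero bdd[of 0]] by (simp add: strip_def)
  \<comment> \<open>beyond height \<open>Y\<close> the damping factor alone brings \<open>\<bar>g\<bar> \<le> C\<close> below \<open>M + d\<close>\<close>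
  define Y where "Y = (C + 1) / (d * (M + d))"
  have dM: "0 < d * (M + d)" using M0 d by simp
  then have Y0: "0 < Y" using C0 by (simp add: Y_def)
  have "d * Y * (M + d) = (d * (M + d)) * Y" by (simp add: ac_simps)
  also have "\<dots> = C + 1"
    unfolding Y_def times_divide_eq_right using dM by (intro nonzero_mult_div_cancel_left) linarith
  finally have YC: "C \<le> d * Y * (M + d)" by simp
  define h where "h z = g z / (1 + complex_of_real d * z)" for z
  define R where "R = cbox (Complex 0 (-Y)) (Complex 1 Y)"
  have Rs: "R \<subseteq> strip" by (auto simp: R_def in_cbox_complex_iff strip_def)
  have nz: "1 + complex_of_real d * z \<noteq> 0" if "z \<in> strip" for z
  proof -
    have "0 < Re (1 + complex_of_real d * z)" using that d by (simp add: strip_def add_pos_nonneg)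
    then show ?thesis by (metis zero_complex.sel(1) order.irrefl)
  qed
  have intR: "interior R \<subseteq> {z. 0 < Re z \<and> Re z < 1}"
    by (auto simp: R_def in_box_complex_iff)
  have holh: "h holomorphic_on interior R"
    unfolding h_def
    by (intro holomorphic_on_divide holomorphic_on_subset[OF hol intR] holomorphic_intros)
       (use intR nz in \<open>auto simp: strip_def\<close>)
  have conth: "continuous_on (closure R) h"
    unfolding h_def R_def closure_cbox
    by (intro continuous_on_divide continuous_on_subset[OF cont] continuous_intros)
       (use Rs nz in \<open>auto simp: R_def\<close>)
  have fr: "cmod (h z) \<le> M + d" if "z \<in> frontier R" for z
  proof -
    have "z \<in> R" "z \<notin> box (Complex 0 (-Y)) (Complex 1 Y)"
      using that by (auto simp: R_def frontier_cbox)
    then have "Re z = 0 \<or> Re z = 1 \<or> \<bar>Im z\<bar> = Y"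
      by (auto simp: R_def in_cbox_complex_iff in_box_complex_iff)
    then have "Re z = 0 \<or> Re z = 1 \<or> C \<le> d * \<bar>Im z\<bar> * (M + d)"
      using YC by metis
    then show ?thesis
      unfolding h_def using \<open>z \<in> R\<close> Rs by (intro three_lines_damped_boundary[OF bdd b0 b1 d]) auto
  qed
  have tR: "complex_of_real t \<in> R" using t Y0 by (simp add: R_def in_cbox_complex_iff)
  have "cmod (h (complex_of_real t)) \<le> M + d"
    by (rule maximum_modulus_frontier[OF holh conth _ fr tR]) (simp add: R_def)
  moreover have "g (complex_of_real t) = h (complex_of_real t) * complex_of_real (1 + d * t)"
    using nz[of "complex_of_real t"] t by (simp add: h_def strip_def)
  then have "cmod (g (complex_of_real t)) = cmod (h (complex_of_real t)) * \<bar>1 + d * t\<bar>"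
    by (simp only: norm_mult norm_of_real)
  moreover have "\<bar>1 + d * t\<bar> \<le> 1 + d" using d t by (simp add: mult_left_le)
  ultimately show ?thesis
    using M0 d by (simp add: mult_mono)
qed

lemma three_lines:
  fixes g :: "complex \<Rightarrow> complex"
  assumes hol: "g holomorphic_on {z. 0 < Re z \<and> Re z < 1}"
    and cont: "continuous_on strip g"
    and bdd: "\<And>z. z \<in> strip \<Longrightarrow> cmod (g z) \<le> C"
    and b0: "\<And>y. cmod (g (\<i> * complex_of_real y)) \<le> M"
    and b1: "\<And>y. cmod (g (1 + \<i> * complex_of_real y)) \<le> M"
    and t: "0 \<le> t" "t \<le> 1"
  shows "cmod (g (complex_of_real t)) \<le> M"
proof -
  have "((\<lambda>d. (M + d) * (1 + d)) \<longlongrightarrow> (M + 0) * (1 + 0)) (at_right 0)"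
    by (intro tendsto_intros)
  then have "((\<lambda>d. (M + d) * (1 + d)) \<longlongrightarrow> M) (at_right 0)" by simp
  then show ?thesis
    by (rule tendsto_lowerbound)
       (auto intro: eventually_mono[OF eventually_at_right_less] three_lines_damped[OF assms])
qed

section \<open>Interpolation of Hilbert--Schmidt sandwiches\<close>

definition bounded_holomorphic_family :: "(complex \<Rightarrow> 'n::finite cmat) \<Rightarrow> bool" where
  "bounded_holomorphic_family A \<longleftrightarrow>
     (\<forall>j k. (\<lambda>z. A z $j$k) holomorphic_on {z. 0 < Re z \<and> Re z < 1} \<and>
            continuous_on strip (\<lambda>z. A z $j$k)) \<and>
     (\<exists>C. \<forall>z\<in>strip. norm (A z) \<le> C)"

lemma bounded_holomorphic_family_const: "bounded_holomorphic_family (\<lambda>z. W)"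
  unfolding bounded_holomorphic_family_def by auto

lemma bounded_holomorphic_family_mult:
  assumes "bounded_holomorphic_family A" "bounded_holomorphic_family B"
  shows "bounded_holomorphic_family (\<lambda>z. A z ** B z)"
proof -
  obtain CA CB where CA: "\<forall>z\<in>strip. norm (A z) \<le> CA" and CB: "\<forall>z\<in>strip. norm (B z) \<le> CB"
    using assms unfolding bounded_holomorphic_family_def by blast
  have "norm (A z ** B z) \<le> CA * CB" if "z \<in> strip" for z
    using CA CB that
    by (intro order_trans[OF norm_matrix_mult_le] mult_mono) (auto intro: order_trans[OF norm_ge_zero])
  then show ?thesis
    using assms unfolding bounded_holomorphic_family_def matrix_mult_nth
    by (auto intro!: holomorphic_on_sum holomorphic_on_mult continuous_on_sum continuous_on_mult)
qed

lemma bounded_holomorphic_family_coefficient: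
  assumes F: "admissible F"
  shows "bounded_holomorphic_family (\<lambda>z. F z i)"
proof -
  have l2: "l2seq (F z)" if "z \<in> strip" for z using F that by (simp add: admissible_def)
  have "continuous_on strip (\<lambda>z. F z i $j$k)" for j k
    unfolding continuous_on_iff
  proof (intro ballI allI impI)
    fix z e assume z: "z \<in> strip" and e: "(0::real) < e"
    obtain d where "d > 0" and d: "\<forall>w\<in>strip. dist w z < d \<longrightarrow> l2norm (\<lambda>i. F w i - F z i) < e"
      using F z e unfolding admissible_def by blast
    moreover have "dist (F w i $j$k) (F z i $j$k) < e" if "w \<in> strip" "dist w z < d" for w
    proof -
      have "dist (F w i $j$k) (F z i $j$k) \<le> norm (F w i - F z i)"
        using entry_le_norm[of "F w i - F z i" j k] by (simp add: dist_norm)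
      also have "\<dots> \<le> l2norm (\<lambda>i. F w i - F z i)"
        using norm_le_l2norm[OF l2seq_diff[OF l2[OF that(1)] l2[OF z]]] by simp
      finally show ?thesis using d that by fastforce
    qed
    ultimately show "\<exists>d>0. \<forall>w\<in>strip. dist w z < d \<longrightarrow> dist (F w i $j$k) (F z i $j$k) < e" by blast
  qed
  moreover obtain C where "\<forall>z\<in>strip. l2norm (F z) \<le> C" using F unfolding admissible_def by blast
  then have "\<forall>z\<in>strip. norm (F z i) \<le> C" using norm_le_l2norm l2 order_trans by blast
  ultimately show ?thesis using F unfolding bounded_holomorphic_family_def admissible_def by blast
qed

definition frob_inner :: "'n::finite cmat \<Rightarrow> 'n cmat \<Rightarrow> complex" where
  "frob_inner W M = (\<Sum>j\<in>UNIV. \<Sum>k\<in>UNIV. cnj (W$j$k) * M$j$k)"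

lemma cmod_frob_inner_le: "cmod (frob_inner W M) \<le> norm W * norm M"
proof -
  have "cmod (frob_inner W M) \<le> (\<Sum>j\<in>UNIV. cmod (cinner (W$j) (M$j)))"
    by (simp add: frob_inner_def cinner_def norm_sum)
  also have "\<dots> \<le> (\<Sum>j\<in>UNIV. norm (W$j) * norm (M$j))" by (intro sum_mono cmod_cinner_le)
  also have "\<dots> \<le> norm W * norm M"
    using sum_mult_le_sqrt_sum_power2[of "\<lambda>j. norm (W$j)" "\<lambda>j. norm (M$j)" UNIV]
    by (simp add: norm_vec_sqrt[of W] norm_vec_sqrt[of M])
  finally show ?thesis .
qed

lemma frob_inner_self: "frob_inner M M = complex_of_real ((norm M)^2)"
  by (simp add: frob_inner_def cinner_def[symmetric] cinner_self norm_vec_power2[of M])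

lemma frob_inner_msc: "frob_inner (msc c W) M = cnj c * frob_inner W M"
  by (simp add: frob_inner_def msc_def sum_distrib_left mult.assoc)

lemma hs_sandwich_norming:
  assumes "hs_sandwich S A B Y \<noteq> 0"
  obtains W where "(\<Sum>i\<in>S. (norm (W i))^2) = 1"
    "(\<Sum>i\<in>S. frob_inner (W i) (A ** Y i ** B)) = complex_of_real (hs_sandwich S A B Y)"
proof
  define Q where "Q = hs_sandwich S A B Y"
  have Qp: "0 < Q" using assms hs_sandwich_nonneg by (simp add: Q_def order_less_le)
  have Q2: "Q^2 = (\<Sum>i\<in>S. (norm (A ** Y i ** B))^2)"
    by (simp add: Q_def hs_sandwich_def sum_nonneg)
  define W where "W i = msc (complex_of_real (1 / Q)) (A ** Y i ** B)" for i
  have "(\<Sum>i\<in>S. (norm (W i))^2) = (\<Sum>i\<in>S. (norm (A ** Y i ** B))^2) / Q^2"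
    using Qp by (simp add: W_def norm_msc norm_divide power_divide sum_divide_distrib)
  then show "(\<Sum>i\<in>S. (norm (W i))^2) = 1" using Qp by (simp add: Q2[symmetric])
  have "(\<Sum>i\<in>S. frob_inner (W i) (A ** Y i ** B))
        = complex_of_real ((\<Sum>i\<in>S. (norm (A ** Y i ** B))^2) / Q)"
    by (simp add: W_def frob_inner_msc frob_inner_self sum_divide_distrib)
  also have "\<dots> = complex_of_real Q" using Qp by (simp only: Q2[symmetric]) (simp add: power2_eq_square)
  finally show "(\<Sum>i\<in>S. frob_inner (W i) (A ** Y i ** B)) = complex_of_real (hs_sandwich S A B Y)"
    by (simp add: Q_def)
qed

lemma cmod_sum_frob_inner_le_hs_sandwich:
  assumes "(\<Sum>i\<in>S. (norm (W i))^2) = 1"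
  shows "cmod (\<Sum>i\<in>S. frob_inner (W i) (A ** Y i ** B)) \<le> hs_sandwich S A B Y"
proof -
  have "cmod (\<Sum>i\<in>S. frob_inner (W i) (A ** Y i ** B)) \<le> (\<Sum>i\<in>S. norm (W i) * norm (A ** Y i ** B))"
    by (intro order_trans[OF norm_sum] sum_mono cmod_frob_inner_le)
  also have "\<dots> \<le> sqrt (\<Sum>i\<in>S. (norm (W i))^2) * sqrt (\<Sum>i\<in>S. (norm (A ** Y i ** B))^2)"
    by (rule sum_mult_le_sqrt_sum_power2)
  finally show ?thesis by (simp add: assms hs_sandwich_def)
qed

text \<open>Pair the sandwiches with the norming sequence at \<open>t\<close> and apply the three lines theorem to the
  resulting bounded holomorphic scalar function.\<close>

lemma hs_sandwich_three_lines:
  fixes t :: real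
  assumes A: "bounded_holomorphic_family A" and B: "bounded_holomorphic_family B"
    and F: "admissible F" and S: "finite S" and t: "0 \<le> t" "t \<le> 1"
    and b0: "\<And>s. hs_sandwich S (A (\<i> * complex_of_real s)) (B (\<i> * complex_of_real s))
                   (F (\<i> * complex_of_real s)) \<le> M"
    and b1: "\<And>s. hs_sandwich S (A (1 + \<i> * complex_of_real s)) (B (1 + \<i> * complex_of_real s))
                   (F (1 + \<i> * complex_of_real s)) \<le> M"
  shows "hs_sandwich S (A t) (B t) (F t) \<le> M"
proof (cases "hs_sandwich S (A t) (B t) (F t) = 0")
  case True
  then show ?thesis using b0[of 0] hs_sandwich_nonneg order_trans by metis
next
  case False
  then obtain W where W1: "(\<Sum>i\<in>S. (norm (W i))^2) = 1"
    and Wt: "(\<Sum>i\<in>S. frob_inner (W i) (A t ** F t i ** B t)) = complex_of_real (hs_sandwich S (A t) (B t) (F t))"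
    by (rule hs_sandwich_norming)
  define P where "P z i = A z ** F z i ** B z" for z i
  define g where "g z = (\<Sum>i\<in>S. frob_inner (W i) (P z i))" for z
  have P: "bounded_holomorphic_family (\<lambda>z. P z i)" for i
    unfolding P_def
    by (intro bounded_holomorphic_family_mult A B bounded_holomorphic_family_coefficient[OF F])
  then obtain C where C: "\<And>i z. z \<in> strip \<Longrightarrow> norm (P z i) \<le> C i"
    unfolding bounded_holomorphic_family_def by metis
  have g_bdd: "cmod (g z) \<le> (\<Sum>i\<in>S. norm (W i) * C i)" if "z \<in> strip" for z
    unfolding g_def
    by (intro order_trans[OF norm_sum] sum_mono order_trans[OF cmod_frob_inner_le]
        mult_left_mono C that) simp
  have g_le: "cmod (g z) \<le> hs_sandwich S (A z) (B z) (F z)" for z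
    unfolding g_def P_def by (rule cmod_sum_frob_inner_le_hs_sandwich[OF W1])
  have "g holomorphic_on {z. 0 < Re z \<and> Re z < 1}" "continuous_on strip g"
    using P unfolding g_def frob_inner_def bounded_holomorphic_family_def
    by (auto intro!: holomorphic_on_sum holomorphic_on_mult continuous_on_sum continuous_on_mult)
  then have "cmod (g (complex_of_real t)) \<le> M"
    by (rule three_lines[OF _ _ g_bdd order_trans[OF g_le b0] order_trans[OF g_le b1] t])
  then show ?thesis using Wt hs_sandwich_nonneg by (simp add: g_def P_def)
qed

lemma admissible_const: "l2seq T \<Longrightarrow> admissible (\<lambda>z. T)"
  unfolding admissible_def by (auto simp: l2norm_def)

lemma admissible_l2seq: "admissible F \<Longrightarrow> z \<in> strip \<Longrightarrow> l2seq (F z)"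
  by (simp add: admissible_def)

lemma bdd_above_boundary_values:
  assumes F: "admissible F" and N: "bounded_on_l2_balls N" and h: "\<And>s. h s \<in> strip"
  shows "bdd_above (range (\<lambda>s::real. N (F (h s))))"
proof -
  obtain r where "\<forall>z\<in>strip. l2norm (F z) \<le> r" using F unfolding admissible_def by blast
  moreover obtain C where "\<And>Y. l2seq Y \<Longrightarrow> l2norm Y \<le> r \<Longrightarrow> N Y \<le> C"
    using bounded_on_l2_ballsE[OF N] by blast
  ultimately show ?thesis using h admissible_l2seq[OF F] by (auto intro!: bdd_aboveI[where M = C])
qed

lemma strip_boundary_points: "\<i> * complex_of_real s \<in> strip" "1 + \<i> * complex_of_real s \<in> strip"
  by (simp_all add: strip_def)

lemma hs_sandwich_le_interp:
  fixes t :: real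
  assumes t: "0 \<le> t" "t \<le> 1" and S: "finite S"
    and N0: "bounded_on_l2_balls N0" and N1: "bounded_on_l2_balls N1"
    and A: "bounded_holomorphic_family A" and B: "bounded_holomorphic_family B"
    and b0: "\<And>s Y. l2seq Y \<Longrightarrow> hs_sandwich S (A (\<i> * complex_of_real s)) (B (\<i> * complex_of_real s)) Y \<le> N0 Y"
    and b1: "\<And>s Y. l2seq Y \<Longrightarrow>
               hs_sandwich S (A (1 + \<i> * complex_of_real s)) (B (1 + \<i> * complex_of_real s)) Y \<le> N1 Y"
    and T: "l2seq T"
  shows "hs_sandwich S (A t) (B t) T \<le> interp N0 N1 t T"
proof -
  consider "t = 0" | "t = 1" | "0 < t \<and> t < 1" using t by linarith
  then show ?thesis
  proof cases
    case 1 then show ?thesis using b0[OF T, of 0] by (simp add: interp_def)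
  next
    case 2 then show ?thesis using b1[OF T, of 0] by (simp add: interp_def)
  next
    case 3
    let ?M = "\<lambda>F. max (SUP s::real. N0 (F (\<i> * complex_of_real s))) (SUP s::real. N1 (F (1 + \<i> * complex_of_real s)))"
    have "hs_sandwich S (A t) (B t) T \<le> ?M F" if F: "admissible F" "F (complex_of_real t) = T" for F
    proof -
      have "hs_sandwich S (A t) (B t) (F t) \<le> ?M F"
      proof (rule hs_sandwich_three_lines[OF A B F(1) S t])
        fix s :: real
        show "hs_sandwich S (A (\<i> * complex_of_real s)) (B (\<i> * complex_of_real s))
                (F (\<i> * complex_of_real s)) \<le> ?M F"
          using b0[OF admissible_l2seq[OF F(1) strip_boundary_points(1)]]
            cSUP_upper[OF UNIV_I bdd_above_boundary_values[OF F(1) N0 strip_boundary_points(1)]]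
          by (meson max.coboundedI1 order_trans)
        show "hs_sandwich S (A (1 + \<i> * complex_of_real s)) (B (1 + \<i> * complex_of_real s))
                (F (1 + \<i> * complex_of_real s)) \<le> ?M F"
          using b1[OF admissible_l2seq[OF F(1) strip_boundary_points(2)]]
            cSUP_upper[OF UNIV_I bdd_above_boundary_values[OF F(1) N1 strip_boundary_points(2)]]
          by (meson max.coboundedI2 order_trans)
      qed
      then show ?thesis using F(2) by simp
    qed
    then show ?thesis
      using 3 admissible_const[OF T] unfolding interp_def by (auto intro!: cInf_greatest)
  qed
qed

lemma interp_le_max:
  assumes N0: "bounded_on_l2_balls N0" "\<And>Y. 0 \<le> N0 Y" and N1: "bounded_on_l2_balls N1"
    and Y: "l2seq Y" and t: "0 \<le> t" "t \<le> 1"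
  shows "interp N0 N1 t Y \<le> max (N0 Y) (N1 Y)"
proof -
  consider "t = 0" | "t = 1" | "0 < t \<and> t < 1" using t by linarith
  then show ?thesis
  proof cases
    case 3
    let ?M = "\<lambda>F. max (SUP s::real. N0 (F (\<i> * complex_of_real s))) (SUP s::real. N1 (F (1 + \<i> * complex_of_real s)))"
    have "0 \<le> ?M F" if "admissible F" for F
      using cSUP_upper[OF UNIV_I[of "0::real"] bdd_above_boundary_values[OF that N0(1) strip_boundary_points(1)]]
        N0(2) by (meson max.coboundedI1 order_trans)
    then have "bdd_below {?M F | F. admissible F \<and> F (complex_of_real t) = Y}"
      by (auto intro!: bdd_belowI[where m = 0])
    moreover have "max (N0 Y) (N1 Y) \<in> {?M F | F. admissible F \<and> F (complex_of_real t) = Y}"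
      using admissible_const[OF Y] by force
    ultimately show ?thesis using 3 unfolding interp_def by (auto intro: cInf_lower)
  qed (simp_all add: interp_def)
qed

lemma bounded_on_l2_balls_interp:
  assumes "bounded_on_l2_balls N0" "\<And>Y. 0 \<le> N0 Y" "bounded_on_l2_balls N1" "0 \<le> t" "t \<le> 1"
  shows "bounded_on_l2_balls (interp N0 N1 t)"
  unfolding bounded_on_l2_balls_def
proof
  fix r
  obtain C0 C1 where "\<And>Y. l2seq Y \<Longrightarrow> l2norm Y \<le> r \<Longrightarrow> N0 Y \<le> C0"
    "\<And>Y. l2seq Y \<Longrightarrow> l2norm Y \<le> r \<Longrightarrow> N1 Y \<le> C1"
    using bounded_on_l2_ballsE assms(1,3) by metis
  then show "\<exists>C. \<forall>Y. l2seq Y \<and> l2norm Y \<le> r \<longrightarrow> interp N0 N1 t Y \<le> C"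
    using interp_le_max[OF assms(1,2,3) _ assms(4,5)] by (meson max.mono order_trans)
qed

section \<open>Duality for \<open>\<parallel>T\<parallel>\<^sub>\<Phi>\<^sub>p\<^sub>,\<^sub>\<Phi>\<^sub>q\<close>\<close>

lemma mtrace_mult_adj: "mtrace (P ** adj R) = frob_inner R (P::'n::finite cmat)"
  unfolding mtrace_def matrix_mult_nth frob_inner_def by (simp add: mult.commute)

lemma mtrace_unitary_conj: assumes "unitary U" shows "mtrace (U ** D ** adj U) = mtrace D"
proof -
  have "mtrace (U ** D ** adj U) = mtrace (D ** adj U ** U)"
    using mtrace_mult_commute[of U "D ** adj U"] by (simp add: matrix_mul_assoc)
  also have "\<dots> = mtrace D" using assms by (simp add: matrix_mul_assoc[symmetric] unitary_def)
  finally show ?thesis .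
qed

lemma diagm_mult_diagm: "diagm a ** diagm b = diagm (\<chi> k. a$k * b$k)"
  by (simp add: diagm_eq_cdiag cdiag_mult_cdiag)

lemma adj_diagm: "adj (diagm s) = diagm s"
  by (simp add: vec_eq_iff diagm_def)

lemma mtrace_diagm: "mtrace (diagm s) = complex_of_real (\<Sum>k\<in>UNIV. s$k)"
  by (simp add: mtrace_def diagm_def)

lemma diagm_sqrt_square:
  assumes "\<forall>k. 0 \<le> s$k"
  shows "diagm (\<chi> k. sqrt (s$k)) ** diagm (\<chi> k. sqrt (s$k)) = diagm s"
  using assms by (simp add: diagm_mult_diagm vec_eq_iff)

text \<open>Nonnegative vectors in the unit ball of \<open>\<ell>\<^sup>p\<close>, parametrised by the reciprocal exponent
  \<open>e = 1/p \<in> [0, 1]\<close>, so that \<open>e = 0\<close> is \<open>\<ell>\<^sup>\<infinity>\<close>.\<close>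

definition lp_unit_ball :: "real \<Rightarrow> real^'n::finite \<Rightarrow> bool" where
  "lp_unit_ball e s \<longleftrightarrow> (if e = 0 then (\<forall>k. s$k \<le> 1) else (\<Sum>k\<in>UNIV. s$k powr (1 / e)) \<le> 1)"

lemma lp_unit_ball_zero: "lp_unit_ball e 0"
  by (simp add: lp_unit_ball_def)

lemma lp_unit_ball_sqrt:
  assumes "\<forall>k. 0 \<le> s$k" "lp_unit_ball e s"
  shows "lp_unit_ball (e / 2) (\<chi> k. sqrt (s$k))"
proof -
  have "sqrt (s$k) powr (1 / (e / 2)) = s$k powr (1 / e)" if "e \<noteq> 0" for k
    using assms(1) that by (simp add: powr_half_sqrt[symmetric] powr_powr)
  then show ?thesis using assms(2) by (simp add: lp_unit_ball_def)
qed

lemma sing_vals_someI: "sing_vals x (SOME s. sing_vals x s)"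
  by (rule someI_ex[OF sing_vals_exist])

lemma sing_val_le_opnorm:
  fixes x U V :: "'n::finite cmat"
  assumes U: "unitary U" and V: "unitary V" and s0: "\<forall>k. 0 \<le> s$k" and x: "x = U ** diagm s ** V"
  shows "s$k \<le> opnorm x"
proof -
  define e where "e = (axis k (1::complex) :: complex^'n)"
  have ne: "norm e = 1" by (simp add: e_def)
  have "x *v (adj V *v e) = (U ** diagm s ** (V ** adj V)) *v e"
    by (simp add: x matrix_vector_mul_assoc matrix_mul_assoc)
  also have "\<dots> = U *v (diagm s *v e)"
    by (simp add: unitary_right[OF V] matrix_vector_mul_assoc)
  also have "diagm s *v e = complex_of_real (s$k) *s e"
    by (simp add: vec_eq_iff diagm_eq_cdiag cdiag_matrix_vector_mult_nth e_def axis_def)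
  finally have "norm (x *v (adj V *v e)) = s$k"
    using s0 by (simp add: norm_unitary_matrix_vector_mult[OF U] norm_scalar_mult_vec ne)
  then show ?thesis
    using norm_matrix_vector_mult_opnorm[of x "adj V *v e"]
    by (simp add: norm_unitary_matrix_vector_mult[OF unitary_adj[OF V]] ne)
qed

lemma opnorm_le_max_sing_val:
  fixes y U V :: "'n::finite cmat"
  assumes U: "unitary U" and V: "unitary V" and y: "y = U ** diagm t ** V"
    and t: "\<forall>k. 0 \<le> t$k" "\<And>k. t$k \<le> m"
  shows "opnorm y \<le> m"
  unfolding opnorm_def
proof (rule onorm_le)
  fix w :: "complex^'n"
  have "norm (y *v w) = norm (diagm t *v (V *v w))"
    by (simp add: y matrix_vector_mul_assoc[symmetric] norm_unitary_matrix_vector_mult[OF U])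
  also have "\<dots> \<le> m * norm (V *v w)"
    unfolding diagm_eq_cdiag by (rule norm_cdiag_matrix_vector_mult_le) (use t in simp)
  finally show "norm (y *v w) \<le> m * norm w" by (simp add: norm_unitary_matrix_vector_mult[OF V])
qed

lemma schatten_zero_le_1: "schatten p (0::'n::finite cmat) \<le> 1"
proof (cases "p = \<infinity>")
  case True
  have "((*v) (0::'n cmat)) = (\<lambda>x. 0)" by (simp add: fun_eq_iff)
  then have "opnorm (0::'n cmat) = 0" unfolding opnorm_def by (simp add: onorm_zero)
  then show ?thesis using True by (simp add: schatten_def)
next
  case False
  define s where "s = (SOME s. sing_vals (0::'n cmat) s)"
  have "sing_vals (0::'n cmat) s" unfolding s_def by (rule sing_vals_someI)
  then obtain U V where U: "unitary U" and V: "unitary V" and e: "(0::'n cmat) = U ** diagm s ** V"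
    unfolding sing_vals_def by blast
  have "adj U ** (U ** diagm s ** V) ** adj V = (adj U ** U) ** diagm s ** (V ** adj V)"
    by (simp add: matrix_mul_assoc)
  then have "diagm s = adj U ** (U ** diagm s ** V) ** adj V"
    using U by (simp add: unitary_right[OF V] unitary_def)
  then have "diagm s = 0" by (simp add: e[symmetric])
  have "s$k = 0" for k
  proof -
    have "(diagm s)$k$k = 0" using \<open>diagm s = 0\<close> by simp
    then show ?thesis by (simp add: diagm_def)
  qed
  then show ?thesis using False by (simp add: schatten_def s_def[symmetric] Let_def)
qed

lemma ereal_inverse_cases:
  assumes "1 \<le> p" "inverse p = ereal e"
  shows "(e = 0 \<and> p = \<infinity>) \<or> (0 < e \<and> e \<le> 1 \<and> p = ereal (1 / e))"
proof (cases p)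
  case (real r)
  with assms show ?thesis by (auto simp: inverse_eq_divide)
qed (use assms in auto)

lemma schatten_le_1_sing_vals:
  fixes x :: "'n::finite cmat"
  assumes p: "1 \<le> p" "inverse p = ereal e" and x: "schatten p x \<le> 1"
  shows "\<exists>U V s. unitary U \<and> unitary V \<and> (\<forall>k. 0 \<le> s$k) \<and> x = U ** diagm s ** V \<and> lp_unit_ball e s"
proof -
  define s where "s = (SOME s. sing_vals x s)"
  have "sing_vals x s" unfolding s_def by (rule sing_vals_someI)
  then obtain U V where U: "unitary U" and V: "unitary V" and s0: "\<forall>k. 0 \<le> s$k"
    and xe: "x = U ** diagm s ** V"
    unfolding sing_vals_def by blast
  have "lp_unit_ball e s"
    using ereal_inverse_cases[OF p]
  proof
    assume "e = 0 \<and> p = \<infinity>"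
    then show ?thesis
      using x sing_val_le_opnorm[OF U V s0 xe] order_trans by (fastforce simp: schatten_def lp_unit_ball_def)
  next
    assume e: "0 < e \<and> e \<le> 1 \<and> p = ereal (1 / e)"
    define \<Sigma> where "\<Sigma> = (\<Sum>k\<in>UNIV. s$k powr (1 / e))"
    have "\<Sigma> powr e \<le> 1" using x e by (simp add: schatten_def s_def[symmetric] \<Sigma>_def)
    then have "\<Sigma> \<le> 1" using e by (metis gr_one_powr not_le)
    then show ?thesis using e by (simp add: lp_unit_ball_def \<Sigma>_def)
  qed
  then show ?thesis using U V s0 xe by blast
qed

text \<open>Norming vectors for the Schatten norms: \<open>\<parallel>y\<parallel>\<^sub>q \<le> \<Sum>\<^sub>k t\<^sub>k r\<^sub>k\<close> with \<open>r\<close> in the unit ball of the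
  dual exponent \<open>q'\<close>, \<open>1/q' = 1 - 1/q\<close>.\<close>

lemma opnorm_le_dual:
  fixes y :: "'n::finite cmat"
  shows "\<exists>U V t r. unitary U \<and> unitary V \<and> (\<forall>k. 0 \<le> t$k) \<and> y = U ** diagm t ** V \<and>
     (\<forall>k. 0 \<le> r$k) \<and> lp_unit_ball 1 r \<and> opnorm y \<le> (\<Sum>k\<in>UNIV. t$k * r$k)"
proof -
  obtain t where "sing_vals y t" using sing_vals_exist by blast
  then obtain U V where U: "unitary U" and V: "unitary V" and t0: "\<forall>k. 0 \<le> t$k"
    and ye: "y = U ** diagm t ** V" by (auto simp: sing_vals_def)
  obtain k0 where k0: "\<And>k. t$k \<le> t$k0"
    using Max_in[of "range (\<lambda>k. t$k)"] Max_ge[of "range (\<lambda>k. t$k)"] by fastforce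
  define r where "r = (axis k0 1 :: real^'n)"
  have "(\<Sum>k\<in>UNIV. t$k * r$k) = t$k0" by (simp add: r_def axis_def if_distrib cong: if_cong)
  moreover have "lp_unit_ball 1 r"
  proof -
    have "r$k powr (1 / 1) = (if k = k0 then 1 else 0)" for k by (simp add: r_def axis_def)
    then show ?thesis by (simp add: lp_unit_ball_def)
  qed
  moreover have "opnorm y \<le> t$k0" by (rule opnorm_le_max_sing_val[OF U V ye t0 k0])
  ultimately show ?thesis using U V t0 ye by (intro exI[of _ U] exI[of _ V] exI[of _ t] exI[of _ r])
      (auto simp: r_def axis_def)
qed

lemma schatten_le_dual_finite:
  fixes y :: "'n::finite cmat"
  assumes e: "0 < e" "e \<le> 1"
  shows "\<exists>U V t r. unitary U \<and> unitary V \<and> (\<forall>k. 0 \<le> t$k) \<and> y = U ** diagm t ** V \<and>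
     (\<forall>k. 0 \<le> r$k) \<and> lp_unit_ball (1 - e) r \<and> schatten (ereal (1 / e)) y \<le> (\<Sum>k\<in>UNIV. t$k * r$k)"
proof -
  define q where "q = 1 / e"
  have q0: "0 < q" and eq: "e * q = 1" using e by (simp_all add: q_def)
  define t where "t = (SOME s. sing_vals y s)"
  have "sing_vals y t" unfolding t_def by (rule sing_vals_someI)
  then obtain U V where U: "unitary U" and V: "unitary V" and t0: "\<forall>k. 0 \<le> t$k"
    and ye: "y = U ** diagm t ** V" unfolding sing_vals_def by blast
  define \<Sigma> where "\<Sigma> = (\<Sum>k\<in>UNIV. t$k powr q)"
  define N where "N = \<Sigma> powr e"
  have sch: "schatten (ereal (1 / e)) y = N"
    using e by (simp add: schatten_def t_def[symmetric] \<Sigma>_def N_def Let_def q_def)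
  obtain r where r: "\<forall>k. 0 \<le> r$k" "lp_unit_ball (1 - e) r" "(\<Sum>k\<in>UNIV. t$k * r$k) = N"
  proof (cases "\<Sigma> = 0")
    case True
    then show ?thesis using that[of 0] by (simp add: lp_unit_ball_zero N_def)
  next
    case False
    then have Sp: "0 < \<Sigma>" by (simp add: \<Sigma>_def sum_nonneg order_less_le)
    then have Np: "0 < N" and Nq: "N powr q = \<Sigma>" by (simp_all add: N_def powr_powr eq)
    \<comment> \<open>equality case of Hoelder's inequality\<close>
    define r where "r = (\<chi> k. t$k powr (q - 1) / N powr (q - 1))"
    have "(\<Sum>k\<in>UNIV. t$k * r$k) = \<Sigma> / N powr (q - 1)"
      using t0 by (simp add: r_def \<Sigma>_def sum_divide_distrib powr_mult_base)
    also have "\<dots> = N" using Np by (simp add: Nq[symmetric] powr_diff)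
    finally have "(\<Sum>k\<in>UNIV. t$k * r$k) = N" .
    moreover have "lp_unit_ball (1 - e) r"
    proof (cases "e = 1")
      case True
      then show ?thesis using Np by (simp add: lp_unit_ball_def r_def q_def)
    next
      case False
      have "(q - 1) * (1 / (1 - e)) = q" using e False by (simp add: q_def field_simps)
      then have "r$k powr (1 / (1 - e)) = t$k powr q / N powr q" for k
        by (simp add: r_def powr_divide powr_powr)
      then show ?thesis using False Sp by (simp add: lp_unit_ball_def sum_divide_distrib[symmetric]
            \<Sigma>_def[symmetric] Nq)
    qed
    moreover have "\<forall>k. 0 \<le> r$k" by (simp add: r_def)
    ultimately show ?thesis using that by blast
  qed
  show ?thesis using U V t0 ye sch r by (intro exI[of _ U] exI[of _ V] exI[of _ t] exI[of _ r]) auto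
qed

lemma schatten_le_dual:
  fixes y :: "'n::finite cmat"
  assumes q: "1 \<le> q" "inverse q = ereal e"
  shows "\<exists>U V t r. unitary U \<and> unitary V \<and> (\<forall>k. 0 \<le> t$k) \<and> y = U ** diagm t ** V \<and>
     (\<forall>k. 0 \<le> r$k) \<and> lp_unit_ball (1 - e) r \<and> schatten q y \<le> (\<Sum>k\<in>UNIV. t$k * r$k)"
  using ereal_inverse_cases[OF q]
proof
  assume "e = 0 \<and> q = \<infinity>"
  then show ?thesis using opnorm_le_dual[of y] by (simp add: schatten_def)
next
  assume "0 < e \<and> e \<le> 1 \<and> q = ereal (1 / e)"
  then show ?thesis using schatten_le_dual_finite[of e y] by simp
qed

lemma cmod_mtrace_rho_le_hs_sandwich:
  fixes T :: "nat \<Rightarrow> 'n::finite cmat" and \<sigma> \<rho> :: "real^'n"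
  assumes x: "x = Ux ** diagm \<sigma> ** diagm \<sigma> ** Vx"
  defines "S \<equiv> {i. T i \<noteq> 0}"
  shows "cmod (mtrace (rho T x ** (adj V ** diagm \<rho> ** diagm \<rho> ** adj U)))
           \<le> hs_sandwich S (diagm \<rho> ** V) (adj Vx ** diagm \<sigma>) T *
             hs_sandwich S (diagm \<rho> ** adj U) (Ux ** diagm \<sigma>) T"
proof -
  let ?A = "diagm \<rho> ** adj U" and ?B = "Ux ** diagm \<sigma>"
  let ?A' = "diagm \<rho> ** V" and ?B' = "adj Vx ** diagm \<sigma>"
  have "mtrace (T i ** x ** adj (T i) ** (adj V ** diagm \<rho> ** diagm \<rho> ** adj U))
        = frob_inner (?A' ** T i ** ?B') (?A ** T i ** ?B)" for i
  proof -
    have "mtrace (T i ** x ** adj (T i) ** (adj V ** diagm \<rho> ** diagm \<rho> ** adj U))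
          = mtrace (?A ** (T i ** ?B ** (diagm \<sigma> ** Vx ** adj (T i) ** adj V ** diagm \<rho>)))"
      using mtrace_mult_commute[of "T i ** ?B ** (diagm \<sigma> ** Vx ** adj (T i) ** adj V ** diagm \<rho>)" ?A]
      by (simp add: x matrix_mul_assoc)
    also have "\<dots> = frob_inner (?A' ** T i ** ?B') (?A ** T i ** ?B)"
      by (simp add: mtrace_mult_adj[symmetric] adj_matrix_mult adj_diagm matrix_mul_assoc)
    finally show ?thesis .
  qed
  then have "mtrace (rho T x ** (adj V ** diagm \<rho> ** diagm \<rho> ** adj U))
             = (\<Sum>i\<in>S. frob_inner (?A' ** T i ** ?B') (?A ** T i ** ?B))"
    by (simp add: rho_def sum_matrix_mult mtrace_sum S_def)
  then have "cmod (mtrace (rho T x ** (adj V ** diagm \<rho> ** diagm \<rho> ** adj U)))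
             \<le> (\<Sum>i\<in>S. norm (?A' ** T i ** ?B') * norm (?A ** T i ** ?B))"
    by (metis (no_types, lifting) order_trans[OF norm_sum] sum_mono cmod_frob_inner_le)
  also have "\<dots> \<le> hs_sandwich S ?A' ?B' T * hs_sandwich S ?A ?B T"
    unfolding hs_sandwich_def by (rule sum_mult_le_sqrt_sum_power2)
  finally show ?thesis .
qed

lemma phi_norm_le_hs_sandwich_bound:
  fixes T :: "nat \<Rightarrow> 'n::finite cmat" and K :: real
  assumes p: "1 \<le> p" "inverse p = ereal a" and q: "1 \<le> q" "inverse q = ereal b"
    and K: "\<And>\<alpha> \<beta> W1 W2. \<forall>k. 0 \<le> \<alpha>$k \<Longrightarrow> \<forall>k. 0 \<le> \<beta>$k \<Longrightarrow>
              lp_unit_ball ((1 - b) / 2) \<alpha> \<Longrightarrow> lp_unit_ball (a / 2) \<beta> \<Longrightarrow> unitary W1 \<Longrightarrow> unitary W2 \<Longrightarrow>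
              hs_sandwich {i. T i \<noteq> 0} (diagm \<alpha> ** W1) (W2 ** diagm \<beta>) T \<le> K"
  shows "phi_norm p q T \<le> K"
proof -
  let ?S = "{i. T i \<noteq> 0}"
  have "hs_sandwich ?S (diagm 0 ** mat 1) (mat 1 ** diagm 0) T \<le> K"
    by (rule K) (simp_all add: lp_unit_ball_zero unitary_mat1)
  then have K0: "0 \<le> K" using hs_sandwich_nonneg order_trans by blast
  have "schatten q (rho T x) \<le> K^2" if x: "schatten p x \<le> 1" for x
  proof -
    obtain Ux Vx s where Ux: "unitary Ux" and Vx: "unitary Vx" and s: "\<forall>k. 0 \<le> s$k" "lp_unit_ball a s"
      and xe: "x = Ux ** diagm s ** Vx"
      using schatten_le_1_sing_vals[OF p x] by blast
    obtain U V t r where U: "unitary U" and V: "unitary V" and ye: "rho T x = U ** diagm t ** V"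
      and r: "\<forall>k. 0 \<le> r$k" "lp_unit_ball (1 - b) r" and sch: "schatten q (rho T x) \<le> (\<Sum>k\<in>UNIV. t$k * r$k)"
      using schatten_le_dual[OF q, of "rho T x"] by blast
    define \<sigma> where "\<sigma> = (\<chi> k. sqrt (s$k))"
    define \<rho> where "\<rho> = (\<chi> k. sqrt (r$k))"
    have xs: "x = Ux ** diagm \<sigma> ** diagm \<sigma> ** Vx"
      using diagm_sqrt_square[OF s(1)] by (metis xe \<sigma>_def matrix_mul_assoc)
    have "rho T x ** (adj V ** diagm \<rho> ** diagm \<rho> ** adj U) = U ** (diagm t ** diagm r) ** adj U"
      using diagm_sqrt_square[OF r(1)]
      by (simp add: ye \<rho>_def matrix_mul_assoc) (simp add: matrix_mul_assoc[symmetric] unitary_right[OF V])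
    then have "complex_of_real (\<Sum>k\<in>UNIV. t$k * r$k)
               = mtrace (rho T x ** (adj V ** diagm \<rho> ** diagm \<rho> ** adj U))"
      by (simp add: mtrace_unitary_conj[OF U] diagm_mult_diagm mtrace_diagm)
    then have "(\<Sum>k\<in>UNIV. t$k * r$k) \<le> cmod (mtrace (rho T x ** (adj V ** diagm \<rho> ** diagm \<rho> ** adj U)))"
      by (metis norm_of_real abs_ge_self)
    also have "cmod (mtrace (rho T x ** (adj V ** diagm \<rho> ** diagm \<rho> ** adj U)))
        \<le> hs_sandwich ?S (diagm \<rho> ** V) (adj Vx ** diagm \<sigma>) T * hs_sandwich ?S (diagm \<rho> ** adj U) (Ux ** diagm \<sigma>) T"
      by (rule cmod_mtrace_rho_le_hs_sandwich[OF xs])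
    also have "\<dots> \<le> K * K"
      using s r U V Ux Vx K0
      by (intro mult_mono K hs_sandwich_nonneg) (auto simp: \<sigma>_def \<rho>_def lp_unit_ball_sqrt unitary_adj)
    finally show ?thesis using sch by (simp add: power2_eq_square)
  qed
  then have "Sup {schatten q (rho T x) | x. schatten p x \<le> 1} \<le> K^2"
    using schatten_zero_le_1 by (intro cSup_least) blast+
  then show ?thesis using real_sqrt_le_mono K0 unfolding phi_norm_def by fastforce
qed

section \<open>Analytic families of diagonal powers\<close>

definition diag_cpowr :: "real^'n::finite \<Rightarrow> complex \<Rightarrow> 'n cmat" where
  "diag_cpowr \<alpha> w = cdiag (\<chi> k. complex_of_real (\<alpha>$k) powr w)"

lemma diag_cpowr_1: "diag_cpowr \<alpha> 1 = diagm \<alpha>"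
  by (simp add: diag_cpowr_def diagm_eq_cdiag)

lemma cmod_of_real_powr: "0 \<le> a \<Longrightarrow> cmod (complex_of_real a powr w) = a powr Re w"
  by (simp add: norm_powr_real_powr)

lemma powr_power2: "((x::real) powr e)^2 = x powr (2 * e)"
  by (simp add: power2_eq_square powr_add[symmetric])

lemma norm_diag_cpowr_le_1:
  assumes "\<forall>k. 0 \<le> \<alpha>$k" "(\<Sum>k\<in>UNIV. \<alpha>$k powr (2 * Re w)) \<le> 1"
  shows "norm (diag_cpowr \<alpha> w) \<le> 1"
proof -
  have "(norm (diag_cpowr \<alpha> w))^2 = (\<Sum>k\<in>UNIV. \<alpha>$k powr (2 * Re w))"
    using assms(1) by (simp add: diag_cpowr_def norm_cdiag_power2 cmod_of_real_powr powr_power2)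
  then show ?thesis using assms(2) by (intro norm_le_of_power2_le) simp_all
qed

lemma powr_le_add_powr_between:
  fixes a x e0 e1 :: real
  assumes a: "0 \<le> a" and x: "min e0 e1 \<le> x" "x \<le> max e0 e1"
  shows "a powr x \<le> a powr e0 + a powr e1"
proof -
  have "a powr x \<le> a powr (max e0 e1) \<or> a powr x \<le> a powr (min e0 e1)"
  proof (cases "1 \<le> a")
    case False
    then show ?thesis using a by (simp add: powr_mono'[OF x(1)])
  qed (simp add: powr_mono[OF x(2)])
  moreover have "a powr (max e0 e1) \<le> a powr e0 + a powr e1" "a powr (min e0 e1) \<le> a powr e0 + a powr e1"
    by (simp_all add: max_def min_def)
  ultimately show ?thesis by linarith
qed

lemma bounded_holomorphic_family_diag_cpowr:
  fixes \<alpha> :: "real^'n::finite"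
  assumes "\<forall>k. 0 \<le> \<alpha>$k"
  shows "bounded_holomorphic_family (\<lambda>z. diag_cpowr \<alpha> (u + complex_of_real c * z))"
proof -
  define C where "C = (\<Sum>j\<in>UNIV. \<alpha>$j powr Re u + \<alpha>$j powr (Re u + c))"
  have entry: "cmod (complex_of_real (\<alpha>$k) powr (u + complex_of_real c * z)) \<le> C" if "z \<in> strip" for z k
  proof -
    have "min (Re u) (Re u + c) \<le> Re u + c * Re z \<and> Re u + c * Re z \<le> max (Re u) (Re u + c)"
      using that mult_left_le[of "Re z" c] mult_left_le[of "Re z" "-c"]
      by (cases "0 \<le> c") (auto simp: strip_def min_def max_def mult_le_0_iff)
    then have "cmod (complex_of_real (\<alpha>$k) powr (u + complex_of_real c * z))
               \<le> \<alpha>$k powr Re u + \<alpha>$k powr (Re u + c)"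
      using assms by (simp add: cmod_of_real_powr powr_le_add_powr_between)
    also have "\<dots> \<le> C" unfolding C_def by (rule member_le_sum) auto
    finally show ?thesis .
  qed
  have "norm (diag_cpowr \<alpha> (u + complex_of_real c * z)) \<le> C * norm (mat 1 :: 'n cmat)"
    if "z \<in> strip" for z
    using norm_cdiag_mult_le[of "\<chi> k. complex_of_real (\<alpha>$k) powr (u + complex_of_real c * z)" C "mat 1"]
      entry[OF that] by (simp add: diag_cpowr_def)
  moreover have "(\<lambda>z. diag_cpowr \<alpha> (u + complex_of_real c * z) $j$k) holomorphic_on X" for j k X
    by (cases "j = k") (simp_all add: diag_cpowr_def cdiag_def holomorphic_intros)
  ultimately show ?thesis
    unfolding bounded_holomorphic_family_def by (blast intro: holomorphic_on_imp_continuous_on)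
qed

lemma norm_diag_cpowr_unitary_le_1:
  assumes "unitary W" "\<forall>k. 0 \<le> \<alpha>$k" "(\<Sum>k\<in>UNIV. \<alpha>$k powr (2 * Re w)) \<le> 1"
  shows "norm (diag_cpowr \<alpha> w ** W) \<le> 1" "norm (W ** diag_cpowr \<alpha> w) \<le> 1"
  using norm_diag_cpowr_le_1[OF assms(2,3)]
  by (simp_all add: norm_unitary_mult_right[OF assms(1)] norm_unitary_mult_left[OF assms(1)])

lemma hs_sandwich_le_R_norm_if_norm_le_1:
  assumes "l2seq Y" "finite S" "unitary W" "\<forall>k. 0 \<le> \<beta>$k" "Re v = 0" "norm A \<le> 1"
  shows "hs_sandwich S A (W ** diag_cpowr \<beta> v) Y \<le> R_norm Y"
proof -
  have "hs_sandwich S A (W ** diag_cpowr \<beta> v) Y \<le> norm A * 1 * R_norm Y"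
    unfolding diag_cpowr_def using assms(4,5)
    by (intro hs_sandwich_le_R_norm[OF assms(1-3)]) (simp add: cmod_of_real_powr)
  also have "\<dots> \<le> R_norm Y" using assms(6) R_norm_nonneg[of Y] by (simp add: mult_left_le_one_le)
  finally show ?thesis .
qed

lemma hs_sandwich_le_C_norm_if_norm_le_1:
  assumes "l2seq Y" "finite S" "unitary W" "\<forall>k. 0 \<le> \<alpha>$k" "Re u = 0" "norm B \<le> 1"
  shows "hs_sandwich S (diag_cpowr \<alpha> u ** W) B Y \<le> C_norm Y"
proof -
  have "hs_sandwich S (diag_cpowr \<alpha> u ** W) B Y \<le> 1 * norm B * C_norm Y"
    unfolding diag_cpowr_def using assms(4,5)
    by (intro hs_sandwich_le_C_norm[OF assms(1-3)]) (simp add: cmod_of_real_powr)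
  also have "\<dots> \<le> C_norm Y" using assms(6) C_norm_nonneg[of Y] by (simp add: mult_left_le_one_le)
  finally show ?thesis .
qed

lemma hs_sandwich_le_min_norm_if_norm_le_1:
  assumes "l2seq Y" "finite S" "norm A \<le> 1" "norm B \<le> 1"
  shows "hs_sandwich S A B Y \<le> min_norm Y"
proof -
  have "hs_sandwich S A B Y \<le> norm A * norm B * min_norm Y"
    by (rule hs_sandwich_le_min_norm[OF assms(1,2)])
  also have "\<dots> \<le> min_norm Y"
    using assms(3,4) min_norm_nonneg[OF assms(1)]
    by (simp add: mult_left_le_one_le mult_le_one)
  finally show ?thesis .
qed

lemma bounded_holomorphic_family_diag_cpowr_mult:
  assumes "\<forall>k. 0 \<le> \<alpha>$k"
  shows "bounded_holomorphic_family (\<lambda>z. diag_cpowr \<alpha> (u + complex_of_real c * z) ** W)"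
    and "bounded_holomorphic_family (\<lambda>z. W ** diag_cpowr \<alpha> (u + complex_of_real c * z))"
  by (intro bounded_holomorphic_family_mult bounded_holomorphic_family_diag_cpowr[OF assms]
      bounded_holomorphic_family_const)+

lemma hs_sandwich_le_interp_R_C:
  fixes \<alpha> \<beta> :: "real^'n::finite" and \<theta> P Q :: real
  assumes \<theta>: "0 \<le> \<theta>" "\<theta> \<le> 1" and S: "finite S" and Y: "l2seq Y"
    and W1: "unitary W1" and W2: "unitary W2"
    and \<alpha>: "\<forall>k. 0 \<le> \<alpha>$k" "(\<Sum>k\<in>UNIV. \<alpha>$k powr (2 * P)) \<le> 1"
    and \<beta>: "\<forall>k. 0 \<le> \<beta>$k" "(\<Sum>k\<in>UNIV. \<beta>$k powr (2 * Q)) \<le> 1"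
    and u: "Re u = P" and v: "Re v = 0"
  shows "hs_sandwich S (diag_cpowr \<alpha> (u + complex_of_real (- P) * complex_of_real \<theta>) ** W1)
           (W2 ** diag_cpowr \<beta> (v + complex_of_real Q * complex_of_real \<theta>)) Y
         \<le> interp R_norm C_norm \<theta> Y"
proof (rule hs_sandwich_le_interp[where A = "\<lambda>z. diag_cpowr \<alpha> (u + complex_of_real (- P) * z) ** W1"
      and B = "\<lambda>z. W2 ** diag_cpowr \<beta> (v + complex_of_real Q * z)",
      OF \<theta> S bounded_on_l2_balls_R_norm bounded_on_l2_balls_C_norm
      bounded_holomorphic_family_diag_cpowr_mult(1)[OF \<alpha>(1)]
      bounded_holomorphic_family_diag_cpowr_mult(2)[OF \<beta>(1)] _ _ Y])
  fix s and Y' :: "nat \<Rightarrow> 'n cmat" assume Y': "l2seq Y'"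
  show "hs_sandwich S (diag_cpowr \<alpha> (u + complex_of_real (- P) * (\<i> * complex_of_real s)) ** W1)
          (W2 ** diag_cpowr \<beta> (v + complex_of_real Q * (\<i> * complex_of_real s))) Y' \<le> R_norm Y'"
    using \<alpha> u v
    by (intro hs_sandwich_le_R_norm_if_norm_le_1[OF Y' S W2 \<beta>(1)] norm_diag_cpowr_unitary_le_1[OF W1 \<alpha>(1)])
      simp_all
  show "hs_sandwich S (diag_cpowr \<alpha> (u + complex_of_real (- P) * (1 + \<i> * complex_of_real s)) ** W1)
          (W2 ** diag_cpowr \<beta> (v + complex_of_real Q * (1 + \<i> * complex_of_real s))) Y' \<le> C_norm Y'"
    using \<beta> u v
    by (intro hs_sandwich_le_C_norm_if_norm_le_1[OF Y' S W1 \<alpha>(1)] norm_diag_cpowr_unitary_le_1[OF W2 \<beta>(1)])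
      simp_all
qed

lemma hs_sandwich_le_interp_min_R_C:
  fixes \<alpha> \<beta> :: "real^'n::finite" and \<psi> \<theta> P Q :: real
  assumes \<psi>: "0 \<le> \<psi>" "\<psi> \<le> 1" and \<theta>: "0 \<le> \<theta>" "\<theta> \<le> 1" and S: "finite S" and T: "l2seq T"
    and W1: "unitary W1" and W2: "unitary W2"
    and \<alpha>: "\<forall>k. 0 \<le> \<alpha>$k" "(\<Sum>k\<in>UNIV. \<alpha>$k powr (2 * P)) \<le> 1"
    and \<beta>: "\<forall>k. 0 \<le> \<beta>$k" "(\<Sum>k\<in>UNIV. \<beta>$k powr (2 * Q)) \<le> 1"
  shows "hs_sandwich S (diag_cpowr \<alpha> (complex_of_real P + complex_of_real (- (P * \<theta>)) * complex_of_real \<psi>) ** W1)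
           (W2 ** diag_cpowr \<beta> (complex_of_real Q + complex_of_real (- (Q * (1 - \<theta>))) * complex_of_real \<psi>)) T
         \<le> interp min_norm (interp R_norm C_norm \<theta>) \<psi> T"
proof (rule hs_sandwich_le_interp[where
      A = "\<lambda>z. diag_cpowr \<alpha> (complex_of_real P + complex_of_real (- (P * \<theta>)) * z) ** W1" and
      B = "\<lambda>z. W2 ** diag_cpowr \<beta> (complex_of_real Q + complex_of_real (- (Q * (1 - \<theta>))) * z)",
      OF \<psi> S bounded_on_l2_balls_min_norm
      bounded_on_l2_balls_interp[OF bounded_on_l2_balls_R_norm R_norm_nonneg bounded_on_l2_balls_C_norm \<theta>]
      bounded_holomorphic_family_diag_cpowr_mult(1)[OF \<alpha>(1)]
      bounded_holomorphic_family_diag_cpowr_mult(2)[OF \<beta>(1)] _ _ T])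
  fix s and Y :: "nat \<Rightarrow> 'n cmat" assume Y: "l2seq Y"
  show "hs_sandwich S
          (diag_cpowr \<alpha> (complex_of_real P + complex_of_real (- (P * \<theta>)) * (\<i> * complex_of_real s)) ** W1)
          (W2 ** diag_cpowr \<beta> (complex_of_real Q + complex_of_real (- (Q * (1 - \<theta>))) * (\<i> * complex_of_real s))) Y
        \<le> min_norm Y"
    using \<alpha> \<beta>
    by (intro hs_sandwich_le_min_norm_if_norm_le_1[OF Y S] norm_diag_cpowr_unitary_le_1[OF W1 \<alpha>(1)]
        norm_diag_cpowr_unitary_le_1[OF W2 \<beta>(1)]) simp_all
  have "complex_of_real P + complex_of_real (- (P * \<theta>)) * (1 + \<i> * complex_of_real s)
        = (complex_of_real P - \<i> * complex_of_real (P * \<theta> * s)) + complex_of_real (- P) * complex_of_real \<theta>"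
    "complex_of_real Q + complex_of_real (- (Q * (1 - \<theta>))) * (1 + \<i> * complex_of_real s)
        = - \<i> * complex_of_real (Q * (1 - \<theta>) * s) + complex_of_real Q * complex_of_real \<theta>"
    by (simp_all add: algebra_simps)
  then show "hs_sandwich S
          (diag_cpowr \<alpha> (complex_of_real P + complex_of_real (- (P * \<theta>)) * (1 + \<i> * complex_of_real s)) ** W1)
          (W2 ** diag_cpowr \<beta> (complex_of_real Q + complex_of_real (- (Q * (1 - \<theta>))) * (1 + \<i> * complex_of_real s))) Y
        \<le> interp R_norm C_norm \<theta> Y"
    by (simp only:) (rule hs_sandwich_le_interp_R_C[OF \<theta> S Y W1 W2 \<alpha> \<beta>]; simp)
qed

lemma hs_sandwich_diagm_le_R_norm:
  assumes T: "l2seq T" and S: "finite S" and W1: "unitary W1" and W2: "unitary W2"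
    and \<alpha>: "\<forall>k. 0 \<le> \<alpha>$k" "lp_unit_ball (1 / 2) \<alpha>" and \<beta>: "\<forall>k. 0 \<le> \<beta>$k" "lp_unit_ball 0 \<beta>"
  shows "hs_sandwich S (diagm \<alpha> ** W1) (W2 ** diagm \<beta>) T \<le> R_norm T"
proof -
  have "norm (diagm \<alpha> ** W1) \<le> 1"
    using norm_diag_cpowr_unitary_le_1(1)[OF W1 \<alpha>(1), of 1] \<alpha>(2) by (simp add: diag_cpowr_1 lp_unit_ball_def)
  moreover have "hs_sandwich S (diagm \<alpha> ** W1) (W2 ** diagm \<beta>) T \<le> norm (diagm \<alpha> ** W1) * 1 * R_norm T"
    using \<beta> unfolding diagm_eq_cdiag by (intro hs_sandwich_le_R_norm[OF T S W2]) (simp add: lp_unit_ball_def)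
  ultimately show ?thesis using R_norm_nonneg[of T] by (simp add: mult_left_le_one_le order_trans)
qed

lemma hs_sandwich_diagm_le_C_norm:
  assumes T: "l2seq T" and S: "finite S" and W1: "unitary W1" and W2: "unitary W2"
    and \<alpha>: "\<forall>k. 0 \<le> \<alpha>$k" "lp_unit_ball 0 \<alpha>" and \<beta>: "\<forall>k. 0 \<le> \<beta>$k" "lp_unit_ball (1 / 2) \<beta>"
  shows "hs_sandwich S (diagm \<alpha> ** W1) (W2 ** diagm \<beta>) T \<le> C_norm T"
proof -
  have "norm (W2 ** diagm \<beta>) \<le> 1"
    using norm_diag_cpowr_unitary_le_1(2)[OF W2 \<beta>(1), of 1] \<beta>(2) by (simp add: diag_cpowr_1 lp_unit_ball_def)
  moreover have "hs_sandwich S (diagm \<alpha> ** W1) (W2 ** diagm \<beta>) T \<le> 1 * norm (W2 ** diagm \<beta>) * C_norm T"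
    using \<alpha> unfolding diagm_eq_cdiag by (intro hs_sandwich_le_C_norm[OF T S W1]) (simp add: lp_unit_ball_def)
  ultimately show ?thesis using C_norm_nonneg[of T] by (simp add: mult_left_le_one_le order_trans)
qed

text \<open>For \<open>\<alpha>\<close> in the unit ball of \<open>\<ell>\<^sup>2\<^sup>P\<close> and \<open>\<beta>\<close> in that of \<open>\<ell>\<^sup>2\<^sup>Q\<close>, the families
  \<open>\<alpha>\<^sup>P\<^sup>(\<^sup>1\<^sup>-\<^sup>\<theta>\<^sup>z\<^sup>)\<close> and \<open>\<beta>\<^sup>Q\<^sup>(\<^sup>1\<^sup>-\<^sup>(\<^sup>1\<^sup>-\<^sup>\<theta>\<^sup>)\<^sup>z\<^sup>)\<close> pass through \<open>\<alpha>\<close> and \<open>\<beta>\<close> at \<open>z = \<psi>\<close>; the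
  corner cases where \<open>P\<close> or \<open>Q\<close> would be infinite are the pure \<open>R\<close> and \<open>C\<close> estimates.\<close>

lemma hs_sandwich_diagm_le_interp:
  fixes \<alpha> \<beta> :: "real^'n::finite" and \<theta> \<psi> :: real
  assumes \<theta>: "0 \<le> \<theta>" "\<theta> \<le> 1" and \<psi>: "0 \<le> \<psi>" "\<psi> \<le> 1" and S: "finite S" and T: "l2seq T"
    and \<alpha>: "\<forall>k. 0 \<le> \<alpha>$k" "lp_unit_ball ((1 - \<theta> * \<psi>) / 2) \<alpha>"
    and \<beta>: "\<forall>k. 0 \<le> \<beta>$k" "lp_unit_ball ((1 - \<psi> + \<theta> * \<psi>) / 2) \<beta>"
    and W1: "unitary W1" and W2: "unitary W2"
  shows "hs_sandwich S (diagm \<alpha> ** W1) (W2 ** diagm \<beta>) T \<le> interp min_norm (interp R_norm C_norm \<theta>) \<psi> T"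
proof -
  define a where "a = 1 - \<psi> + \<theta> * \<psi>"
  define b where "b = \<theta> * \<psi>"
  have "0 \<le> \<theta> * \<psi>" "\<theta> * \<psi> \<le> \<psi>" using \<theta> \<psi> by (simp_all add: mult_left_le_one_le)
  then consider "\<psi> = 1" "\<theta> = 0" | "\<psi> = 1" "\<theta> = 1" | "0 < a" "b < 1"
    using \<theta> \<psi> unfolding a_def b_def by (smt (verit) mult_cancel_right1 mult_eq_0_iff)
  then show ?thesis
  proof cases
    case 1
    then show ?thesis
      using hs_sandwich_diagm_le_R_norm[OF T S W1 W2 \<alpha>(1) _ \<beta>(1)] \<alpha>(2) \<beta>(2) by (simp add: interp_def)
  next
    case 2
    then show ?thesis
      using hs_sandwich_diagm_le_C_norm[OF T S W1 W2 \<alpha>(1) _ \<beta>(1)] \<alpha>(2) \<beta>(2) by (simp add: interp_def)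
  next
    case 3
    define P where "P = 1 / (1 - b)"
    define Q where "Q = 1 / a"
    have "(\<Sum>k\<in>UNIV. \<alpha>$k powr (2 * P)) \<le> 1" "(\<Sum>k\<in>UNIV. \<beta>$k powr (2 * Q)) \<le> 1"
      using \<alpha>(2) \<beta>(2) 3 by (simp_all add: lp_unit_ball_def P_def Q_def a_def b_def)
    then have "hs_sandwich S (diag_cpowr \<alpha> (complex_of_real P + complex_of_real (- (P * \<theta>)) * complex_of_real \<psi>) ** W1)
           (W2 ** diag_cpowr \<beta> (complex_of_real Q + complex_of_real (- (Q * (1 - \<theta>))) * complex_of_real \<psi>)) T
         \<le> interp min_norm (interp R_norm C_norm \<theta>) \<psi> T"
      by (intro hs_sandwich_le_interp_min_R_C[OF \<psi> \<theta> S T W1 W2 \<alpha>(1) _ \<beta>(1)])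
    moreover have "P + - (P * \<theta>) * \<psi> = 1" "Q + - (Q * (1 - \<theta>)) * \<psi> = 1"
      using 3 by (simp_all add: P_def Q_def a_def b_def field_simps)
    then have "complex_of_real P + complex_of_real (- (P * \<theta>)) * complex_of_real \<psi> = 1"
      "complex_of_real Q + complex_of_real (- (Q * (1 - \<theta>))) * complex_of_real \<psi> = 1"
      by (metis of_real_1 of_real_add of_real_mult)+
    ultimately show ?thesis by (simp only: diag_cpowr_1)
  qed
qed

theorem lemma4p3:
  fixes p q :: ereal and \<theta> \<psi> :: real and T :: "nat \<Rightarrow> complex^'n::finite^'n"
  assumes "1 \<le> p" and "p \<le> q"
    and "0 \<le> \<theta>" and "\<theta> \<le> 1" and "0 \<le> \<psi>" and "\<psi> \<le> 1"
    and "inverse p = ereal (1 - \<psi> + \<theta> * \<psi>)"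
    and "inverse q = ereal (\<theta> * \<psi>)"
    and "finite {i. T i \<noteq> 0}"
  shows "phi_norm p q T \<le> interp min_norm (interp R_norm C_norm \<theta>) \<psi> T"
proof (rule phi_norm_le_hs_sandwich_bound[OF assms(1,7) order_trans[OF assms(1,2)] assms(8)])
  fix \<alpha> \<beta> :: "real^'n" and W1 W2 :: "'n cmat"
  assume "\<forall>k. 0 \<le> \<alpha>$k" "\<forall>k. 0 \<le> \<beta>$k" "lp_unit_ball ((1 - \<theta> * \<psi>) / 2) \<alpha>"
    "lp_unit_ball ((1 - \<psi> + \<theta> * \<psi>) / 2) \<beta>" "unitary W1" "unitary W2"
  then show "hs_sandwich {i. T i \<noteq> 0} (diagm \<alpha> ** W1) (W2 ** diagm \<beta>) T
               \<le> interp min_norm (interp R_norm C_norm \<theta>) \<psi> T"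
    by (intro hs_sandwich_diagm_le_interp[OF assms(3-6,9) l2seq_finite_support[OF assms(9)]])
qed

end
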